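(* Let $\mathbb{M}^2$ be a Riemannian surface and $\psi:S\to\mathbb{M}^2\times\mathbb{R}$ an immersion with constant positive extrinsic curvature $K$, normal $N$ chosen so that $II$ is positive definite, and let $z$ be a local conformal parameter for $II$ with $I=E\,dz^2+2F|dz|^2+\bar E\,d\bar z^2$, $II=2\rho|dz|^2$. Then $$\Delta^{II}h=(2K-\kappa(1-\nu^2))\frac{\nu}{K},\qquad \Delta^{II}\nu=-2H\nu,\qquad E_{\bar z}=-\kappa\,\frac{\nu\rho}{K}\,h_z.$$
   Context: $\mathbb{M}^2\times\mathbb{R}$ has the product metric; $h$ is the height function of $S$, $\nu=\langle N,\partial_t\rangle$, $\kappa$ is the Gauss curvature of $\mathbb{M}^2$ evaluated at the projection of the point. $\Delta^{II}$ is the Laplacian of the Riemannian metric $II$ (so $\Delta^{II}=\frac{2}{\rho}\partial_z\partial_{\bar z}$). $H$ is the mean curvature, $H=-F\rho/D$ with $D=|E|^2-F^2$. *)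

theory Defs
  imports "HOL-Analysis.Analysis"
begin

text \<open>Points of a coordinate chart of the surface M^2 and the conformal parameter z
  are both encoded as complex numbers; coordinate 1 = real part, coordinate 2 = imaginary part.
  A tangent vector of M^2 at a chart point is likewise a complex number (a = a1 + i a2 means
  a1 d/dw1 + a2 d/dw2).  A tangent vector of M^2 x R is a pair of such a vector and a real number
  (the dt-component).\<close>

definition coord :: "nat \<Rightarrow> complex \<Rightarrow> real" where
  "coord i a = (if i = 1 then Re a else Im a)"

definition pdx :: "(complex \<Rightarrow> 'a::real_normed_vector) \<Rightarrow> complex \<Rightarrow> 'a" where
  "pdx f z = vector_derivative (\<lambda>s. f (Complex s (Im z))) (at (Re z))"

definition pdy :: "(complex \<Rightarrow> 'a::real_normed_vector) \<Rightarrow> complex \<Rightarrow> 'a" where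
  "pdy f z = vector_derivative (\<lambda>s. f (Complex (Re z) s)) (at (Im z))"

definition pd :: "nat \<Rightarrow> (complex \<Rightarrow> 'a::real_normed_vector) \<Rightarrow> complex \<Rightarrow> 'a" where
  "pd i f = (if i = 1 then pdx f else pdy f)"

primrec iter_pd :: "bool list \<Rightarrow> (complex \<Rightarrow> 'a::real_normed_vector) \<Rightarrow> complex \<Rightarrow> 'a" where
  "iter_pd [] f = f"
| "iter_pd (b # bs) f = (if b then pdx (iter_pd bs f) else pdy (iter_pd bs f))"

definition smooth_on :: "complex set \<Rightarrow> (complex \<Rightarrow> 'a::real_normed_vector) \<Rightarrow> bool" where
  "smooth_on \<Omega> f \<longleftrightarrow> (\<forall>bs. \<forall>z\<in>\<Omega>. iter_pd bs f differentiable (at z))"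

definition dz :: "(complex \<Rightarrow> complex) \<Rightarrow> complex \<Rightarrow> complex" where
  "dz f z = (pdx f z - \<i> * pdy f z) / 2"

definition dzb :: "(complex \<Rightarrow> complex) \<Rightarrow> complex \<Rightarrow> complex" where
  "dzb f z = (pdx f z + \<i> * pdy f z) / 2"

type_synonym metric = "nat \<Rightarrow> nat \<Rightarrow> complex \<Rightarrow> real"

definition gM :: "metric \<Rightarrow> complex \<Rightarrow> complex \<Rightarrow> complex \<Rightarrow> real" where
  "gM g w a b = (\<Sum>i\<in>{1,2}. \<Sum>j\<in>{1,2}. g i j w * coord i a * coord j b)"

definition detg :: "metric \<Rightarrow> complex \<Rightarrow> real" where
  "detg g w = g 1 1 w * g 2 2 w - g 1 2 w * g 2 1 w"

definition ginv :: "metric \<Rightarrow> nat \<Rightarrow> nat \<Rightarrow> complex \<Rightarrow> real" where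
  "ginv g k l w =
     (if k = 1 \<and> l = 1 then g 2 2 w / detg g w
      else if k = 2 \<and> l = 2 then g 1 1 w / detg g w
      else - g k l w / detg g w)"

definition chr :: "metric \<Rightarrow> nat \<Rightarrow> nat \<Rightarrow> nat \<Rightarrow> complex \<Rightarrow> real" where
  "chr g k i j w = 1/2 * (\<Sum>l\<in>{1,2}. ginv g k l w *
      (pd i (g j l) w + pd j (g i l) w - pd l (g i j) w))"

text \<open>Components R^l of R(d1,d2)d2, with R(X,Y)Z = nabla_X nabla_Y Z - nabla_Y nabla_X Z - nabla_[X,Y] Z.\<close>

definition riem :: "metric \<Rightarrow> nat \<Rightarrow> complex \<Rightarrow> real" where
  "riem g l w = pd 1 (chr g l 2 2) w - pd 2 (chr g l 1 2) w
     + (\<Sum>m\<in>{1,2}. chr g m 2 2 w * chr g l 1 m w - chr g m 1 2 w * chr g l 2 m w)"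

definition gauss_curv :: "metric \<Rightarrow> complex \<Rightarrow> real" where
  "gauss_curv g w = (\<Sum>l\<in>{1,2}. g 1 l w * riem g l w) / detg g w"

section \<open>Immersion psi = (X, h) : Omega \<rightarrow> M^2 x R, with product metric\<close>

definition Ifund :: "metric \<Rightarrow> (complex \<Rightarrow> complex) \<Rightarrow> (complex \<Rightarrow> real) \<Rightarrow> complex \<Rightarrow> nat \<Rightarrow> nat \<Rightarrow> real" where
  "Ifund g X h z i j = gM g (X z) (pd i X z) (pd j X z) + pd i h z * pd j h z"

definition cov2 :: "metric \<Rightarrow> (complex \<Rightarrow> complex) \<Rightarrow> complex \<Rightarrow> nat \<Rightarrow> nat \<Rightarrow> complex" where
  "cov2 g X z i j =
     (let c = (\<lambda>k. coord k (pd i (pd j X) z)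
               + (\<Sum>a\<in>{1,2}. \<Sum>b\<in>{1,2}. chr g k a b (X z) * coord a (pd i X z) * coord b (pd j X z)))
      in Complex (c 1) (c 2))"

text \<open>Second fundamental form II_ij = <nabla_{d_i} dpsi(d_j), N>, N = (NM, nu).\<close>

definition IIfund :: "metric \<Rightarrow> (complex \<Rightarrow> complex) \<Rightarrow> (complex \<Rightarrow> real) \<Rightarrow> (complex \<Rightarrow> complex)
    \<Rightarrow> (complex \<Rightarrow> real) \<Rightarrow> complex \<Rightarrow> nat \<Rightarrow> nat \<Rightarrow> real" where
  "IIfund g X h NM \<nu> z i j = gM g (X z) (cov2 g X z i j) (NM z) + pd i (pd j h) z * \<nu> z"

definition qf :: "(nat \<Rightarrow> nat \<Rightarrow> real) \<Rightarrow> complex \<Rightarrow> real" where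
  "qf M a = (\<Sum>i\<in>{1,2}. \<Sum>j\<in>{1,2}. M i j * coord i a * coord j a)"

definition det2 :: "(nat \<Rightarrow> nat \<Rightarrow> real) \<Rightarrow> real" where
  "det2 M = M 1 1 * M 2 2 - M 1 2 * M 2 1"

definition ext_curv :: "(nat \<Rightarrow> nat \<Rightarrow> real) \<Rightarrow> (nat \<Rightarrow> nat \<Rightarrow> real) \<Rightarrow> real" where
  "ext_curv I II = det2 II / det2 I"

definition mean_curv :: "(nat \<Rightarrow> nat \<Rightarrow> real) \<Rightarrow> (nat \<Rightarrow> nat \<Rightarrow> real) \<Rightarrow> real" where
  "mean_curv I II = (I 2 2 * II 1 1 - I 1 2 * II 2 1 - I 2 1 * II 1 2 + I 1 1 * II 2 2) / (2 * det2 I)"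

text \<open>Laplacian of the metric II = 2 rho |dz|^2: (2/rho) d_z d_zbar.\<close>

definition lapII :: "(complex \<Rightarrow> real) \<Rightarrow> (complex \<Rightarrow> complex) \<Rightarrow> complex \<Rightarrow> complex" where
  "lapII \<rho> f z = 2 / complex_of_real (\<rho> z) * dz (dzb f) z"

end

theory Submission
  imports Defs
begin

text \<open>
  Tangent vectors of M^2 x R are handled as triples
  (coordinate 1, coordinate 2, dt-component) with the product metric gprod.

  The argument is the classical moving-frame computation.  In a conformal
  parameter for II one has II = 2 rho |dz|^2 and det I = 4 rho^2 / K; differentiating the
  latter and combining with Codazzi gives two linear relations for the derivatives of I, which
  are exactly E_zbar = - kappa nu rho / K h_z.  The two Laplacian identities follow from the
  explicit Hessians of h and nu together with |grad h|^2 + nu^2 = 1.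
\<close>

section \<open>Partial derivatives in the coordinates x = Re z, y = Im z\<close>

text \<open>Coordinate indices are the numerals 1 and 2; keep 1 from being rewritten to Suc 0.\<close>

declare One_nat_def [simp del]

lemma sum12: "(\<Sum>x\<in>{1::nat,2}. f x) = f 1 + f 2"
  by simp

definition basis_dir :: "nat \<Rightarrow> complex" where
  "basis_dir i = (if i = 1 then 1 else \<i>)"

lemma basis_dir_simps [simp]: "basis_dir 1 = 1" "basis_dir 2 = \<i>"
  by (simp_all add: basis_dir_def)

lemma pd_i_simps: "pd 1 f = pdx f" "pd 2 f = pdy f"
  by (simp_all add: pd_def)

lemma line_x_deriv:
  assumes "(f has_derivative f') (at w)"
  shows "((\<lambda>s. f (Complex s (Im w))) has_vector_derivative f' 1) (at (Re w))"
proof -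
  have l: "((\<lambda>s. Complex s (Im w)) has_derivative (\<lambda>t. complex_of_real t)) (at (Re w))"
  proof -
    have e: "(\<lambda>s. Complex s (Im w)) = (\<lambda>s. complex_of_real s + Complex 0 (Im w))"
      by (auto simp: complex_eq_iff)
    show ?thesis unfolding e
      using has_derivative_add[OF bounded_linear.has_derivative[OF bounded_linear_of_real has_derivative_ident] has_derivative_const] by simp
  qed
  have w: "Complex (Re w) (Im w) = w" by simp
  have "((f \<circ> (\<lambda>s. Complex s (Im w))) has_derivative (f' \<circ> complex_of_real)) (at (Re w))"
    using diff_chain_at[OF l] assms w by simp
  moreover have "(f' \<circ> complex_of_real) = (\<lambda>t. t *\<^sub>R f' 1)"
  proof
    fix t
    have "linear f'" using assms has_derivative_linear by blast
    then have "f' (t *\<^sub>R 1) = t *\<^sub>R f' 1" by (simp add: linear_scale)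
    then show "(f' \<circ> complex_of_real) t = t *\<^sub>R f' 1" by (simp add: scaleR_conv_of_real)
  qed
  ultimately show ?thesis unfolding has_vector_derivative_def by (simp add: comp_def)
qed

lemma line_y_deriv:
  assumes "(f has_derivative f') (at w)"
  shows "((\<lambda>s. f (Complex (Re w) s)) has_vector_derivative f' \<i>) (at (Im w))"
proof -
  have l: "((\<lambda>s. Complex (Re w) s) has_derivative (\<lambda>t. complex_of_real t * \<i>)) (at (Im w))"
  proof -
    have e: "(\<lambda>s. Complex (Re w) s) = (\<lambda>s. complex_of_real s * \<i> + complex_of_real (Re w))"
      by (auto simp: complex_eq_iff)
    show ?thesis unfolding e
      using has_derivative_add[OF has_derivative_mult_left[OF bounded_linear.has_derivative[OF bounded_linear_of_real has_derivative_ident], of \<i>] has_derivative_const] by simp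
  qed
  have w: "Complex (Re w) (Im w) = w" by simp
  have "((f \<circ> (\<lambda>s. Complex (Re w) s)) has_derivative (f' \<circ> (\<lambda>t. complex_of_real t * \<i>))) (at (Im w))"
    using diff_chain_at[OF l] assms w by simp
  moreover have "(f' \<circ> (\<lambda>t. complex_of_real t * \<i>)) = (\<lambda>t. t *\<^sub>R f' \<i>)"
  proof
    fix t
    have "linear f'" using assms has_derivative_linear by blast
    then have "f' (t *\<^sub>R \<i>) = t *\<^sub>R f' \<i>" by (simp add: linear_scale)
    then show "(f' \<circ> (\<lambda>t. complex_of_real t * \<i>)) t = t *\<^sub>R f' \<i>" by (simp add: scaleR_conv_of_real)
  qed
  ultimately show ?thesis unfolding has_vector_derivative_def by (simp add: comp_def)
qed

lemma pdx_eval: "(f has_derivative f') (at w) \<Longrightarrow> pdx f w = f' 1"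
  unfolding pdx_def by (rule vector_derivative_at[OF line_x_deriv])

lemma pdy_eval: "(f has_derivative f') (at w) \<Longrightarrow> pdy f w = f' \<i>"
  unfolding pdy_def by (rule vector_derivative_at[OF line_y_deriv])

lemma pd_eval: "(f has_derivative f') (at w) \<Longrightarrow> pd i f w = f' (basis_dir i)"
  by (simp add: pd_def basis_dir_def pdx_eval pdy_eval)

lemma pdx_local:
  assumes "open S" "w \<in> S" "\<And>v. v \<in> S \<Longrightarrow> f v = g v"
  shows "pdx f w = pdx g w"
proof -
  let ?T = "(\<lambda>s. Complex s (Im w)) -` S"
  have T: "open ?T" "Re w \<in> ?T" using assms by (auto intro!: open_vimage continuous_intros)
  have "((\<lambda>s. f (Complex s (Im w))) has_vector_derivative D) (at (Re w)) \<longleftrightarrow>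
        ((\<lambda>s. g (Complex s (Im w))) has_vector_derivative D) (at (Re w))" for D
    by (intro iffI) (auto intro: has_vector_derivative_transform_within_open[OF _ T] simp: assms(3))
  then show ?thesis unfolding pdx_def vector_derivative_def by simp
qed

lemma pdy_local:
  assumes "open S" "w \<in> S" "\<And>v. v \<in> S \<Longrightarrow> f v = g v"
  shows "pdy f w = pdy g w"
proof -
  let ?T = "(\<lambda>s. Complex (Re w) s) -` S"
  have T: "open ?T" "Im w \<in> ?T" using assms by (auto intro!: open_vimage continuous_intros)
  have "((\<lambda>s. f (Complex (Re w) s)) has_vector_derivative D) (at (Im w)) \<longleftrightarrow>
        ((\<lambda>s. g (Complex (Re w) s)) has_vector_derivative D) (at (Im w))" for D
    by (intro iffI) (auto intro: has_vector_derivative_transform_within_open[OF _ T] simp: assms(3))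
  then show ?thesis unfolding pdy_def vector_derivative_def by simp
qed

lemma pd_local:
  assumes "open S" "w \<in> S" "\<And>v. v \<in> S \<Longrightarrow> f v = g v"
  shows "pd i f w = pd i g w"
  using pdx_local[OF assms] pdy_local[OF assms] by (simp add: pd_def)

lemma diff_local:
  assumes "f differentiable (at w)" "open S" "w \<in> S" "\<And>v. v \<in> S \<Longrightarrow> f v = g v"
  shows "g differentiable (at w)"
  using assms has_derivative_transform_within_open unfolding differentiable_def by blast

lemma pd_add:
  fixes f g :: "complex \<Rightarrow> 'b::real_normed_vector"
  assumes "f differentiable (at w)" "g differentiable (at w)"
  shows "pd i (\<lambda>v. f v + g v) w = pd i f w + pd i g w"
proof -
  obtain Df where Df: "(f has_derivative Df) (at w)" using assms differentiable_def by blast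
  obtain Dg where Dg: "(g has_derivative Dg) (at w)" using assms differentiable_def by blast
  show ?thesis using pd_eval[OF has_derivative_add[OF Df Dg]] pd_eval[OF Df] pd_eval[OF Dg] by simp
qed

lemma pd_diff:
  fixes f g :: "complex \<Rightarrow> 'b::real_normed_vector"
  assumes "f differentiable (at w)" "g differentiable (at w)"
  shows "pd i (\<lambda>v. f v - g v) w = pd i f w - pd i g w"
proof -
  obtain Df where Df: "(f has_derivative Df) (at w)" using assms differentiable_def by blast
  obtain Dg where Dg: "(g has_derivative Dg) (at w)" using assms differentiable_def by blast
  show ?thesis using pd_eval[OF has_derivative_diff[OF Df Dg]] pd_eval[OF Df] pd_eval[OF Dg] by simp
qed

lemma pd_minus:
  fixes f :: "complex \<Rightarrow> 'b::real_normed_vector"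
  assumes "f differentiable (at w)"
  shows "pd i (\<lambda>v. - f v) w = - pd i f w"
proof -
  obtain D where D: "(f has_derivative D) (at w)" using assms differentiable_def by blast
  show ?thesis using pd_eval[OF has_derivative_minus[OF D], of i] pd_eval[OF D, of i] by simp
qed

lemma pd_mult:
  fixes f g :: "complex \<Rightarrow> 'b::real_normed_algebra"
  assumes "f differentiable (at w)" "g differentiable (at w)"
  shows "pd i (\<lambda>v. f v * g v) w = f w * pd i g w + pd i f w * g w"
proof -
  obtain Df where Df: "(f has_derivative Df) (at w)" using assms differentiable_def by blast
  obtain Dg where Dg: "(g has_derivative Dg) (at w)" using assms differentiable_def by blast
  show ?thesis using pd_eval[OF has_derivative_mult[OF Df Dg]] pd_eval[OF Df] pd_eval[OF Dg] by simp
qed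

lemma pd_const: "pd i (\<lambda>v. (c::'b::real_normed_vector)) w = 0"
proof -
  have "((\<lambda>v::complex. c) has_derivative (\<lambda>h. 0)) (at w)" by (rule has_derivative_const)
  from pd_eval[OF this] show ?thesis by simp
qed

lemma pd_cmult:
  fixes f :: "complex \<Rightarrow> 'b::real_normed_algebra"
  assumes "f differentiable (at w)"
  shows "pd i (\<lambda>v. c * f v) w = c * pd i f w"
proof -
  have "pd i (\<lambda>v. c * f v) w = c * pd i f w + pd i (\<lambda>v. c) w * f w"
    by (rule pd_mult[OF differentiable_const assms])
  then show ?thesis by (simp add: pd_const)
qed

lemma pd_mult3:
  fixes f g k :: "complex \<Rightarrow> real"
  assumes "f differentiable (at w)" "g differentiable (at w)" "k differentiable (at w)"
  shows "pd i (\<lambda>v. f v * g v * k v) w = pd i f w * g w * k w + f w * pd i g w * k w + f w * g w * pd i k w"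
proof -
  have "pd i (\<lambda>v. f v * g v * k v) w = (f w * g w) * pd i k w + pd i (\<lambda>v. f v * g v) w * k w"
    using pd_mult[of "\<lambda>v. f v * g v" w k i] assms by simp
  also have "pd i (\<lambda>v. f v * g v) w = f w * pd i g w + pd i f w * g w" using pd_mult assms by blast
  finally show ?thesis by (simp add: algebra_simps)
qed

lemma pd_sum12:
  fixes F :: "nat \<Rightarrow> complex \<Rightarrow> real"
  assumes "F 1 differentiable (at w)" "F 2 differentiable (at w)"
  shows "pd a (\<lambda>v. \<Sum>m\<in>{1,2}. F m v) w = (\<Sum>m\<in>{1,2}. pd a (F m) w)"
  using pd_add[OF assms, of a] by (simp add: sum12)

lemma pd_comp:
  fixes \<phi> :: "complex \<Rightarrow> real" and X :: "complex \<Rightarrow> complex"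
  assumes "\<phi> differentiable (at (X w))" "X differentiable (at w)"
  shows "pd i (\<lambda>v. \<phi> (X v)) w = pd 1 \<phi> (X w) * Re (pd i X w) + pd 2 \<phi> (X w) * Im (pd i X w)"
proof -
  obtain Dp where Dp: "(\<phi> has_derivative Dp) (at (X w))" using assms differentiable_def by blast
  obtain DX where DX: "(X has_derivative DX) (at w)" using assms differentiable_def by blast
  have c: "((\<phi> \<circ> X) has_derivative (Dp \<circ> DX)) (at w)" by (rule diff_chain_at[OF DX Dp])
  have lin: "linear Dp" using Dp has_derivative_linear by blast
  have "Dp v = Re v * Dp 1 + Im v * Dp \<i>" for v
  proof -
    have "v = Re v *\<^sub>R 1 + Im v *\<^sub>R \<i>" by (simp add: complex_eq_iff)
    then have "Dp v = Dp (Re v *\<^sub>R 1 + Im v *\<^sub>R \<i>)" by simp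
    also have "\<dots> = Re v * Dp 1 + Im v * Dp \<i>" using lin by (simp add: linear_add linear_scale)
    finally show ?thesis .
  qed
  from this[of "DX (basis_dir i)"] show ?thesis
    using pd_eval[OF c, of i] pd_eval[OF DX, of i] pd_eval[OF Dp, of 1] pd_eval[OF Dp, of 2]
    by (simp add: comp_def mult.commute)
qed

lemma pd_Re:
  fixes X :: "complex \<Rightarrow> complex"
  assumes "X differentiable (at w)"
  shows "pd i (\<lambda>v. Re (X v)) w = Re (pd i X w)"
proof -
  obtain DX where DX: "(X has_derivative DX) (at w)" using assms differentiable_def by blast
  have "((\<lambda>v. Re (X v)) has_derivative (\<lambda>h. Re (DX h))) (at w)"
    by (rule bounded_linear.has_derivative[OF bounded_linear_Re DX])
  from pd_eval[OF this, of i] pd_eval[OF DX, of i] show ?thesis by simp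
qed

lemma pd_Im:
  fixes X :: "complex \<Rightarrow> complex"
  assumes "X differentiable (at w)"
  shows "pd i (\<lambda>v. Im (X v)) w = Im (pd i X w)"
proof -
  obtain DX where DX: "(X has_derivative DX) (at w)" using assms differentiable_def by blast
  have "((\<lambda>v. Im (X v)) has_derivative (\<lambda>h. Im (DX h))) (at w)"
    by (rule bounded_linear.has_derivative[OF bounded_linear_Im DX])
  from pd_eval[OF this, of i] pd_eval[OF DX, of i] show ?thesis by simp
qed

lemma pd_coord:
  fixes X :: "complex \<Rightarrow> complex"
  assumes "X differentiable (at w)"
  shows "pd i (\<lambda>v. coord a (X v)) w = coord a (pd i X w)"
  using pd_Re[OF assms] pd_Im[OF assms] by (simp add: coord_def)

lemma pd_ofreal:
  fixes f :: "complex \<Rightarrow> real"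
  assumes "f differentiable (at w)"
  shows "pd i (\<lambda>v. complex_of_real (f v)) w = complex_of_real (pd i f w)"
proof -
  obtain D where D: "(f has_derivative D) (at w)" using assms differentiable_def by blast
  have "((\<lambda>v. complex_of_real (f v)) has_derivative (\<lambda>h. complex_of_real (D h))) (at w)"
    by (rule bounded_linear.has_derivative[OF bounded_linear_of_real D])
  from pd_eval[OF this, of i] pd_eval[OF D, of i] show ?thesis by simp
qed

lemma ofreal_diff: "(f::complex \<Rightarrow> real) differentiable (at z) \<Longrightarrow> (\<lambda>v. complex_of_real (f v)) differentiable (at z)"
  by (rule differentiable_compose[OF bounded_linear_imp_differentiable[OF bounded_linear_of_real]])

lemma coord_diff: "X differentiable (at w) \<Longrightarrow> (\<lambda>v. coord a (X v)) differentiable (at w)"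
  unfolding coord_def
  using differentiable_compose[where f=Re, OF bounded_linear_imp_differentiable[OF bounded_linear_Re]]
    differentiable_compose[where f=Im, OF bounded_linear_imp_differentiable[OF bounded_linear_Im]]
  by (cases "a = 1") auto

lemma smooth_iter: "smooth_on S f \<Longrightarrow> w \<in> S \<Longrightarrow> iter_pd bs f differentiable (at w)"
  by (simp add: smooth_on_def)

lemma smooth_d0: "smooth_on S f \<Longrightarrow> w \<in> S \<Longrightarrow> f differentiable (at w)"
  using smooth_iter[of S f w "[]"] by simp

lemma iter_pd_append: "iter_pd bs (pd i f) = iter_pd (bs @ [i = 1]) f"
  by (induction bs) (auto simp: pd_def)

lemma smooth_pd: "smooth_on S f \<Longrightarrow> smooth_on S (pd i f)"
  unfolding smooth_on_def by (simp add: iter_pd_append)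

lemma smooth_d1: "smooth_on S f \<Longrightarrow> w \<in> S \<Longrightarrow> pd i f differentiable (at w)"
  using smooth_d0 smooth_pd by blast

lemma smooth_coord:
  assumes "smooth_on S X" "open S"
  shows "smooth_on S (\<lambda>v. coord a (X v))"
proof -
  have eq: "\<forall>v\<in>S. iter_pd bs (\<lambda>v. coord a (X v)) v = coord a (iter_pd bs X v)" for bs
  proof (induction bs)
    case Nil then show ?case by simp
  next
    case (Cons b bs)
    show ?case
    proof
      fix v assume v: "v \<in> S"
      have d: "iter_pd bs X differentiable (at v)" using smooth_iter[OF assms(1) v] .
      have "pd (if b then 1 else 2) (iter_pd bs (\<lambda>v. coord a (X v))) v
            = pd (if b then 1 else 2) (\<lambda>u. coord a (iter_pd bs X u)) v"
        by (rule pd_local[OF assms(2) v]) (use Cons in auto)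
      also have "\<dots> = coord a (pd (if b then 1 else 2) (iter_pd bs X) v)" by (rule pd_coord[OF d])
      finally show "iter_pd (b # bs) (\<lambda>v. coord a (X v)) v = coord a (iter_pd (b # bs) X v)"
        by (cases b) (simp_all add: pd_def)
    qed
  qed
  show ?thesis unfolding smooth_on_def
  proof (intro allI ballI)
    fix bs v assume v: "v \<in> S"
    have "(\<lambda>u. coord a (iter_pd bs X u)) differentiable (at v)"
      by (rule coord_diff[OF smooth_iter[OF assms(1) v]])
    then show "iter_pd bs (\<lambda>v. coord a (X v)) differentiable (at v)"
      by (rule diff_local[OF _ assms(2) v]) (use eq in auto)
  qed
qed

lemma dx_line:
  fixes f :: "complex \<Rightarrow> real"
  assumes "f differentiable (at (Complex u c))"
  shows "((\<lambda>s. f (Complex s c)) has_real_derivative pdx f (Complex u c)) (at u)"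
proof -
  obtain D where D: "(f has_derivative D) (at (Complex u c))" using assms differentiable_def by blast
  have "((\<lambda>s. f (Complex s c)) has_vector_derivative D 1) (at u)"
    using line_x_deriv[OF D] by simp
  moreover have "pdx f (Complex u c) = D 1" using pdx_eval[OF D] .
  ultimately show ?thesis by (simp add: has_real_derivative_iff_has_vector_derivative)
qed

lemma dy_line:
  fixes f :: "complex \<Rightarrow> real"
  assumes "f differentiable (at (Complex c u))"
  shows "((\<lambda>s. f (Complex c s)) has_real_derivative pdy f (Complex c u)) (at u)"
proof -
  obtain D where D: "(f has_derivative D) (at (Complex c u))" using assms differentiable_def by blast
  have "((\<lambda>s. f (Complex c s)) has_vector_derivative D \<i>) (at u)"
    using line_y_deriv[OF D] by simp
  moreover have "pdy f (Complex c u) = D \<i>" using pdy_eval[OF D] .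
  ultimately show ?thesis by (simp add: has_real_derivative_iff_has_vector_derivative)
qed

definition rect_diff :: "(complex \<Rightarrow> real) \<Rightarrow> real \<Rightarrow> real \<Rightarrow> real \<Rightarrow> real" where
  "rect_diff f x y s = f (Complex (x+s) (y+s)) - f (Complex (x+s) y) - f (Complex x (y+s)) + f (Complex x y)"

text \<open>If pdx f is within delta of an affine map c + L(q - w) on the square, the mean value
  theorem in x shows that the second difference is within 2 s delta of s^2 L(i).\<close>

lemma rect_diff_pdx:
  fixes f :: "complex \<Rightarrow> real"
  assumes s: "s > 0" and lin: "linear L"
    and diff: "\<And>q. x \<le> Re q \<Longrightarrow> Re q \<le> x + s \<Longrightarrow> y \<le> Im q \<Longrightarrow> Im q \<le> y + s \<Longrightarrow> f differentiable (at q)"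
    and approx: "\<And>q. x \<le> Re q \<Longrightarrow> Re q \<le> x + s \<Longrightarrow> y \<le> Im q \<Longrightarrow> Im q \<le> y + s \<Longrightarrow>
                   \<bar>pdx f q - c - L (q - w)\<bar> \<le> \<delta>"
  shows "\<bar>rect_diff f x y s - s * s * L \<i>\<bar> \<le> 2 * s * \<delta>"
proof -
  have "\<exists>\<xi>. x < \<xi> \<and> \<xi> < x + s \<and>
      (f (Complex (x+s) (y+s)) - f (Complex (x+s) y)) - (f (Complex x (y+s)) - f (Complex x y))
       = ((x + s) - x) * (pdx f (Complex \<xi> (y+s)) - pdx f (Complex \<xi> y))"
  proof (rule MVT2[where f = "\<lambda>u. f (Complex u (y+s)) - f (Complex u y)"])
    show "x < x + s" using s by simp
    fix u assume "x \<le> u" "u \<le> x + s"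
    then show "((\<lambda>u. f (Complex u (y + s)) - f (Complex u y)) has_real_derivative
        pdx f (Complex u (y + s)) - pdx f (Complex u y)) (at u)"
      using s by (intro DERIV_diff dx_line diff) auto
  qed
  then obtain \<xi> where \<xi>: "x < \<xi>" "\<xi> < x + s"
    and mvt: "rect_diff f x y s = s * (pdx f (Complex \<xi> (y+s)) - pdx f (Complex \<xi> y))"
    unfolding rect_diff_def by (auto simp: algebra_simps)
  have top: "\<bar>pdx f (Complex \<xi> (y+s)) - c - L (Complex \<xi> (y+s) - w)\<bar> \<le> \<delta>"
    using \<xi> s by (intro approx) auto
  have bot: "\<bar>pdx f (Complex \<xi> y) - c - L (Complex \<xi> y - w)\<bar> \<le> \<delta>"
    using \<xi> s by (intro approx) auto
  have "(Complex \<xi> (y+s) - w) - (Complex \<xi> y - w) = s *\<^sub>R \<i>" by (simp add: complex_eq_iff)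
  then have "L (Complex \<xi> (y+s) - w) - L (Complex \<xi> y - w) = L (s *\<^sub>R \<i>)"
    using lin by (metis linear_diff)
  also have "\<dots> = s * L \<i>" using lin by (simp add: linear_scale)
  finally have "\<bar>(pdx f (Complex \<xi> (y+s)) - pdx f (Complex \<xi> y)) - s * L \<i>\<bar> \<le> 2 * \<delta>"
    using top bot by (simp add: abs_le_iff)
  then have "s * \<bar>(pdx f (Complex \<xi> (y+s)) - pdx f (Complex \<xi> y)) - s * L \<i>\<bar> \<le> s * (2 * \<delta>)"
    using s by (simp add: mult_left_mono)
  moreover have "rect_diff f x y s - s * s * L \<i> = s * ((pdx f (Complex \<xi> (y+s)) - pdx f (Complex \<xi> y)) - s * L \<i>)" by (simp add: mvt algebra_simps)
  ultimately show ?thesis using s by (simp add: abs_mult)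
qed

text \<open>The same estimate, via the mean value theorem in y, in terms of pdy f and L(1).\<close>

lemma rect_diff_pdy:
  fixes f :: "complex \<Rightarrow> real"
  assumes s: "s > 0" and lin: "linear L"
    and diff: "\<And>q. x \<le> Re q \<Longrightarrow> Re q \<le> x + s \<Longrightarrow> y \<le> Im q \<Longrightarrow> Im q \<le> y + s \<Longrightarrow> f differentiable (at q)"
    and approx: "\<And>q. x \<le> Re q \<Longrightarrow> Re q \<le> x + s \<Longrightarrow> y \<le> Im q \<Longrightarrow> Im q \<le> y + s \<Longrightarrow>
                   \<bar>pdy f q - c - L (q - w)\<bar> \<le> \<delta>"
  shows "\<bar>rect_diff f x y s - s * s * L 1\<bar> \<le> 2 * s * \<delta>"
proof -
  have "\<exists>\<eta>. y < \<eta> \<and> \<eta> < y + s \<and>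
      (f (Complex (x+s) (y+s)) - f (Complex x (y+s))) - (f (Complex (x+s) y) - f (Complex x y))
       = ((y + s) - y) * (pdy f (Complex (x+s) \<eta>) - pdy f (Complex x \<eta>))"
  proof (rule MVT2[where f = "\<lambda>u. f (Complex (x+s) u) - f (Complex x u)"])
    show "y < y + s" using s by simp
    fix u assume "y \<le> u" "u \<le> y + s"
    then show "((\<lambda>u. f (Complex (x + s) u) - f (Complex x u)) has_real_derivative
        pdy f (Complex (x + s) u) - pdy f (Complex x u)) (at u)"
      using s by (intro DERIV_diff dy_line diff) auto
  qed
  then obtain \<eta> where \<eta>: "y < \<eta>" "\<eta> < y + s"
    and mvt: "rect_diff f x y s = s * (pdy f (Complex (x+s) \<eta>) - pdy f (Complex x \<eta>))"
    unfolding rect_diff_def by (auto simp: algebra_simps)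
  have right: "\<bar>pdy f (Complex (x+s) \<eta>) - c - L (Complex (x+s) \<eta> - w)\<bar> \<le> \<delta>"
    using \<eta> s by (intro approx) auto
  have left: "\<bar>pdy f (Complex x \<eta>) - c - L (Complex x \<eta> - w)\<bar> \<le> \<delta>"
    using \<eta> s by (intro approx) auto
  have "(Complex (x+s) \<eta> - w) - (Complex x \<eta> - w) = s *\<^sub>R 1" by (simp add: complex_eq_iff)
  then have "L (Complex (x+s) \<eta> - w) - L (Complex x \<eta> - w) = L (s *\<^sub>R 1)"
    using lin by (metis linear_diff)
  also have "\<dots> = s * L 1" using lin by (simp add: linear_scale)
  finally have "\<bar>(pdy f (Complex (x+s) \<eta>) - pdy f (Complex x \<eta>)) - s * L 1\<bar> \<le> 2 * \<delta>"
    using right left by (simp add: abs_le_iff)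
  then have "s * \<bar>(pdy f (Complex (x+s) \<eta>) - pdy f (Complex x \<eta>)) - s * L 1\<bar> \<le> s * (2 * \<delta>)"
    using s by (simp add: mult_left_mono)
  moreover have "rect_diff f x y s - s * s * L 1 = s * ((pdy f (Complex (x+s) \<eta>) - pdy f (Complex x \<eta>)) - s * L 1)" by (simp add: mvt algebra_simps)
  ultimately show ?thesis using s by (simp add: abs_mult)
qed

text \<open>On the square of side s at w, a first-order Taylor estimate valid on the disc of radius
  3 s holds with error e (2 s), since every point of the square is within 2 s of w.\<close>

lemma square_near:
  assumes "Re w \<le> Re q" "Re q \<le> Re w + s" "Im w \<le> Im q" "Im q \<le> Im w + s"
  shows "cmod (q - w) \<le> 2 * s"
proof -
  have "cmod (q - w) \<le> \<bar>Re (q - w)\<bar> + \<bar>Im (q - w)\<bar>" by (rule cmod_le)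
  also have "\<dots> \<le> 2 * s" using assms by simp
  finally show ?thesis .
qed

lemma taylor_on_square:
  fixes F :: "complex \<Rightarrow> real"
  assumes taylor: "\<And>q. cmod (q - w) < d \<Longrightarrow> \<bar>F q - F w - L (q - w)\<bar> \<le> e * cmod (q - w)"
    and e: "e \<ge> 0" and s: "s > 0" "3 * s \<le> d"
    and q: "Re w \<le> Re q" "Re q \<le> Re w + s" "Im w \<le> Im q" "Im q \<le> Im w + s"
  shows "\<bar>F q - F w - L (q - w)\<bar> \<le> e * (2 * s)"
proof -
  have near: "cmod (q - w) \<le> 2 * s" by (rule square_near[OF q])
  then have "\<bar>F q - F w - L (q - w)\<bar> \<le> e * cmod (q - w)" using s by (intro taylor) auto
  also have "\<dots> \<le> e * (2 * s)" using near e by (intro mult_left_mono)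
  finally show ?thesis .
qed

text \<open>If both first partials of f are differentiable at w, their derivatives L1, L2 satisfy
  |L1(i) - L2(1)| \<le> 8 e for every e > 0: compare both with the second difference of f over
  a small square at w.\<close>

lemma mixed_partials_close:
  fixes f :: "complex \<Rightarrow> real"
  assumes S: "open S" "w \<in> S" and fd: "\<And>v. v \<in> S \<Longrightarrow> f differentiable (at v)"
    and L1: "(pdx f has_derivative L1) (at w)" and L2: "(pdy f has_derivative L2) (at w)"
    and e: "e > 0"
  shows "\<bar>L1 \<i> - L2 1\<bar> \<le> 8 * e"
proof -
  have lin: "linear L1" "linear L2" using L1 L2 has_derivative_linear by blast+
  obtain d1 where d1: "d1 > 0" "\<And>q. cmod (q - w) < d1 \<Longrightarrow> \<bar>pdx f q - pdx f w - L1 (q - w)\<bar> \<le> e * cmod (q - w)"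
    using L1[unfolded has_derivative_at_alt] e by (metis real_norm_def)
  obtain d2 where d2: "d2 > 0" "\<And>q. cmod (q - w) < d2 \<Longrightarrow> \<bar>pdy f q - pdy f w - L2 (q - w)\<bar> \<le> e * cmod (q - w)"
    using L2[unfolded has_derivative_at_alt] e by (metis real_norm_def)
  obtain d0 where d0: "d0 > 0" "ball w d0 \<subseteq> S" using S open_contains_ball by blast
  define s where "s = min d0 (min d1 d2) / 3"
  have s: "s > 0" "3 * s \<le> d0" "3 * s \<le> d1" "3 * s \<le> d2" using d0 d1 d2 by (auto simp: s_def)
  have diff: "f differentiable (at q)"
    if "Re w \<le> Re q" "Re q \<le> Re w + s" "Im w \<le> Im q" "Im q \<le> Im w + s" for q
  proof (rule fd)
    have "cmod (q - w) < d0" using square_near[OF that] s by linarith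
    then show "q \<in> S" using d0(2) by (auto simp: dist_norm norm_minus_commute)
  qed
  let ?R = "rect_diff f (Re w) (Im w) s"
  have T1: "\<bar>pdx f q - pdx f w - L1 (q - w)\<bar> \<le> e * (2 * s)"
    if "Re w \<le> Re q" "Re q \<le> Re w + s" "Im w \<le> Im q" "Im q \<le> Im w + s" for q
    by (rule taylor_on_square[where d = d1, OF d1(2)]) (use e s that in auto)
  have R1: "\<bar>?R - s * s * L1 \<i>\<bar> \<le> 2 * s * (e * (2 * s))" by (rule rect_diff_pdx[OF s(1) lin(1) diff T1])
  have T2: "\<bar>pdy f q - pdy f w - L2 (q - w)\<bar> \<le> e * (2 * s)"
    if "Re w \<le> Re q" "Re q \<le> Re w + s" "Im w \<le> Im q" "Im q \<le> Im w + s" for q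
    by (rule taylor_on_square[where d = d2, OF d2(2)]) (use e s that in auto)
  have R2: "\<bar>?R - s * s * L2 1\<bar> \<le> 2 * s * (e * (2 * s))" by (rule rect_diff_pdy[OF s(1) lin(2) diff T2])
  have "\<bar>s * s * L1 \<i> - s * s * L2 1\<bar> \<le> 2 * (2 * s * (e * (2 * s)))"
    using R1 R2 by arith
  moreover have "\<bar>s * s * L1 \<i> - s * s * L2 1\<bar> = (s * s) * \<bar>L1 \<i> - L2 1\<bar>"
    by (simp add: abs_mult right_diff_distrib[symmetric])
  ultimately have "(s * s) * \<bar>L1 \<i> - L2 1\<bar> \<le> (s * s) * (8 * e)"
    by (simp add: algebra_simps)
  then show ?thesis using s by simp
qed

lemma schwarz_real:
  fixes f :: "complex \<Rightarrow> real"
  assumes S: "open S" "w \<in> S" and fd: "\<And>v. v \<in> S \<Longrightarrow> f differentiable (at v)"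
    and pxd: "pdx f differentiable (at w)" and pyd: "pdy f differentiable (at w)"
  shows "pdy (pdx f) w = pdx (pdy f) w"
proof -
  obtain L1 where L1: "(pdx f has_derivative L1) (at w)" using pxd differentiable_def by blast
  obtain L2 where L2: "(pdy f has_derivative L2) (at w)" using pyd differentiable_def by blast
  have "L1 \<i> = L2 1"
  proof (rule ccontr)
    assume "L1 \<i> \<noteq> L2 1"
    then show False using mixed_partials_close[OF S fd L1 L2, of "\<bar>L1 \<i> - L2 1\<bar> / 16"] by simp
  qed
  then show ?thesis using pdy_eval[OF L1] pdx_eval[OF L2] by simp
qed

lemma schwarz_smooth:
  fixes f :: "complex \<Rightarrow> real"
  assumes "smooth_on S f" "open S" "w \<in> S"
  shows "pd i (pd j f) w = pd j (pd i f) w"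
proof -
  have "pdy (pdx f) w = pdx (pdy f) w"
  proof (rule schwarz_real[OF assms(2,3)])
    show "\<And>v. v \<in> S \<Longrightarrow> f differentiable at v" using smooth_d0[OF assms(1)] .
    show "pdx f differentiable at w" using smooth_d1[OF assms(1,3), of 1] by (simp add: pd_def)
    show "pdy f differentiable at w" using smooth_d1[OF assms(1,3), of 2] by (simp add: pd_def)
  qed
  then show ?thesis by (auto simp: pd_def)
qed

lemma schwarz_smooth_c:
  fixes X :: "complex \<Rightarrow> complex"
  assumes "smooth_on S X" "open S" "w \<in> S"
  shows "pd i (pd j X) w = pd j (pd i X) w"
proof -
  have c: "coord a (pd i (pd j X) w) = pd i (pd j (\<lambda>v. coord a (X v))) w" for a i j
  proof -
    have "coord a (pd i (pd j X) w) = pd i (\<lambda>v. coord a (pd j X v)) w"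
      by (rule pd_coord[symmetric]) (rule smooth_d1[OF assms(1,3)])
    also have "\<dots> = pd i (pd j (\<lambda>v. coord a (X v))) w"
      by (rule pd_local[OF assms(2,3)]) (rule pd_coord[symmetric], rule smooth_d0[OF assms(1)])
    finally show ?thesis .
  qed
  have "coord a (pd i (pd j X) w) = coord a (pd j (pd i X) w)" for a
    using c[of a i j] c[of a j i] schwarz_smooth[OF smooth_coord[OF assms(1,2), of a] assms(2,3), of i j] by simp
  from this[of 1] this[of 2] show ?thesis by (simp add: coord_def complex_eq_iff)
qed

lemma lap_real:
  fixes f :: "complex \<Rightarrow> real"
  assumes S: "open S" "z \<in> S" and f: "smooth_on S f"
  shows "lapII \<rho> (\<lambda>w. complex_of_real (f w)) z
     = complex_of_real ((pd 1 (pd 1 f) z + pd 2 (pd 2 f) z) / (2 * \<rho> z))"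
proof -
  define F where "F = (\<lambda>w. complex_of_real (f w))"
  define H where "H = (\<lambda>v. (1/2) * complex_of_real (pd 1 f v) + (\<i>/2) * complex_of_real (pd 2 f v))"
  have e: "dzb F v = H v" if v: "v \<in> S" for v
  proof -
    have d: "f differentiable (at v)" using smooth_d0[OF f v] .
    have "pdx F v = complex_of_real (pd 1 f v)" using pd_ofreal[OF d, of 1] by (simp add: F_def pd_def)
    moreover have "pdy F v = complex_of_real (pd 2 f v)" using pd_ofreal[OF d, of 2] by (simp add: F_def pd_def)
    ultimately show ?thesis by (simp add: dzb_def H_def field_simps)
  qed
  have dH: "pd k H z = (1/2) * complex_of_real (pd k (pd 1 f) z) + (\<i>/2) * complex_of_real (pd k (pd 2 f) z)" for k
  proof -
    have d1: "(\<lambda>v. complex_of_real (pd 1 f v)) differentiable (at z)" by (rule ofreal_diff[OF smooth_d1[OF f S(2)]])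
    have d2: "(\<lambda>v. complex_of_real (pd 2 f v)) differentiable (at z)" by (rule ofreal_diff[OF smooth_d1[OF f S(2)]])
    have "pd k H z = pd k (\<lambda>v. (1/2) * complex_of_real (pd 1 f v)) z + pd k (\<lambda>v. (\<i>/2) * complex_of_real (pd 2 f v)) z"
      unfolding H_def by (rule pd_add) (use d1 d2 in auto)
    also have "\<dots> = (1/2) * pd k (\<lambda>v. complex_of_real (pd 1 f v)) z + (\<i>/2) * pd k (\<lambda>v. complex_of_real (pd 2 f v)) z"
      by (simp only: pd_cmult[OF d1] pd_cmult[OF d2])
    also have "\<dots> = (1/2) * complex_of_real (pd k (pd 1 f) z) + (\<i>/2) * complex_of_real (pd k (pd 2 f) z)"
      using pd_ofreal[OF smooth_d1[OF f S(2)]] by simp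
    finally show ?thesis .
  qed
  have px: "pdx (dzb F) z = pd 1 H z" unfolding pd_i_simps by (rule pdx_local[OF S]) (rule e)
  have py: "pdy (dzb F) z = pd 2 H z" unfolding pd_i_simps by (rule pdy_local[OF S]) (rule e)
  have sw: "pd 1 (pd 2 f) z = pd 2 (pd 1 f) z" by (rule schwarz_smooth[OF f S])
  have "dz (dzb F) z = complex_of_real ((pd 1 (pd 1 f) z + pd 2 (pd 2 f) z) / 4)"
    unfolding dz_def px py dH sw by (simp add: complex_eq_iff)
  then have "lapII \<rho> F z = 2 / complex_of_real (\<rho> z) * complex_of_real ((pd 1 (pd 1 f) z + pd 2 (pd 2 f) z) / 4)"
    by (simp only: lapII_def)
  also have "\<dots> = complex_of_real (2 / \<rho> z * ((pd 1 (pd 1 f) z + pd 2 (pd 2 f) z) / 4))"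
    by simp
  also have "2 / \<rho> z * ((pd 1 (pd 1 f) z + pd 2 (pd 2 f) z) / 4) = (pd 1 (pd 1 f) z + pd 2 (pd 2 f) z) / (2 * \<rho> z)"
    by (cases "\<rho> z = 0") (simp_all add: field_simps)
  finally show ?thesis by (simp add: F_def)
qed

section \<open>The metric of M^2 in a chart\<close>

locale chart_metric =
  fixes g :: metric and U :: "complex set"
  assumes U_open: "open U"
    and g_smooth: "\<forall>i\<in>{1,2}. \<forall>j\<in>{1,2}. smooth_on U (g i j)"
    and g_sym: "\<forall>w\<in>U. g 1 2 w = g 2 1 w"
    and g_posdef: "\<forall>w\<in>U. g 1 1 w > 0 \<and> detg g w > 0"
begin

lemma g_entry_smooth: "a \<in> {1,2} \<Longrightarrow> b \<in> {1,2} \<Longrightarrow> smooth_on U (g a b)"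
  using g_smooth by blast

lemma g_pd_sym: "w \<in> U \<Longrightarrow> pd c (g 1 2) w = pd c (g 2 1) w"
  by (rule pd_local[OF U_open]) (use g_sym in auto)

lemma det_nz: "w \<in> U \<Longrightarrow> detg g w \<noteq> 0"
  using g_posdef by force

lemma ginv_simps: "ginv g 1 1 w = g 2 2 w / detg g w" "ginv g 2 2 w = g 1 1 w / detg g w"
  "ginv g 1 2 w = - g 1 2 w / detg g w" "ginv g 2 1 w = - g 2 1 w / detg g w"
  by (simp_all add: ginv_def)

lemma g_diff: "w \<in> U \<Longrightarrow> a \<in> {1,2} \<Longrightarrow> b \<in> {1,2} \<Longrightarrow> g a b differentiable (at w)"
  using smooth_d0 g_entry_smooth by blast

lemma g_diff1: "w \<in> U \<Longrightarrow> a \<in> {1,2} \<Longrightarrow> b \<in> {1,2} \<Longrightarrow> pd c (g a b) differentiable (at w)"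
  using smooth_d1 g_entry_smooth by blast

lemma detg_diff: "w \<in> U \<Longrightarrow> detg g differentiable (at w)"
proof -
  assume w: "w \<in> U"
  have e: "detg g = (\<lambda>v. g 1 1 v * g 2 2 v - g 1 2 v * g 2 1 v)" by (simp add: detg_def[abs_def])
  show ?thesis unfolding e using g_diff[OF w] by (intro differentiable_diff differentiable_mult) auto
qed

lemma ginv_diff:
  assumes w: "w \<in> U" and kl: "k \<in> {1,2}" "l \<in> {1,2}"
  shows "ginv g k l differentiable (at w)"
proof -
  have dn: "detg g w \<noteq> 0" using det_nz w .
  have dd: "detg g differentiable (at w)" using detg_diff w .
  have q: "(\<lambda>v. f v / detg g v) differentiable (at w)" if "f differentiable (at w)" for f
    using that dd dn by (intro differentiable_divide) auto
  from kl have "k = 1 \<or> k = 2" "l = 1 \<or> l = 2" by auto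
  then show ?thesis
    apply (elim disjE)
    apply (simp_all add: ginv_def[abs_def])
    apply (auto intro!: q differentiable_minus g_diff w)
    done
qed

lemma chr_diff:
  assumes w: "w \<in> U" and kij: "k \<in> {1,2}" "i \<in> {1,2}" "j \<in> {1,2}"
  shows "chr g k i j differentiable (at w)"
proof -
  have e: "chr g k i j = (\<lambda>v. 1/2 * (ginv g k 1 v * (pd i (g j 1) v + pd j (g i 1) v - pd 1 (g i j) v)
      + ginv g k 2 v * (pd i (g j 2) v + pd j (g i 2) v - pd 2 (g i j) v)))"
    by (simp add: chr_def[abs_def] sum12)
  show ?thesis unfolding e using kij
    by (intro differentiable_mult differentiable_add differentiable_diff differentiable_const
        ginv_diff[OF w] g_diff1[OF w]) auto
qed

lemma metric_compat:
  assumes w: "w \<in> U" and abc: "a \<in> {1,2}" "b \<in> {1,2}" "c \<in> {1,2}"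
  shows "pd c (g a b) w = (\<Sum>m\<in>{1,2}. g m b w * chr g m c a w + g a m w * chr g m c b w)"
proof -
  have s: "g 2 1 w = g 1 2 w" using g_sym w by simp
  have d: "detg g w \<noteq> 0" using det_nz w by simp
  have ps: "pd k (g 2 1) w = pd k (g 1 2) w" for k using g_pd_sym w by simp
  from abc have "a = 1 \<or> a = 2" "b = 1 \<or> b = 2" "c = 1 \<or> c = 2" by auto
  then show ?thesis
    apply (elim disjE)
    apply (simp_all only: chr_def sum12 ginv_simps s ps)
    apply (simp_all add: field_simps d)
    apply (simp_all only: detg_def s)
    apply (simp_all add: algebra_simps)
    done
qed

lemma chr_sym:
  assumes w: "w \<in> U" and ab: "a \<in> {1,2}" "b \<in> {1,2}"
  shows "chr g k a b w = chr g k b a w"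
proof -
  have ps: "pd k (g 2 1) w = pd k (g 1 2) w" for k using g_pd_sym w by simp
  from ab have "a = 1 \<or> a = 2" "b = 1 \<or> b = 2" by auto
  then show ?thesis
    apply (elim disjE)
    apply (simp_all only: chr_def sum12 ps)
    apply (simp_all add: algebra_simps)
    done
qed

lemma gM_sym: "w \<in> U \<Longrightarrow> gM g w u v = gM g w v u"
  using g_sym by (simp add: gM_def sum12 algebra_simps)

end

text \<open>Components R^k_{l a b} of the curvature tensor R(d_a, d_b) d_l; riem is R^l_{2 1 2}.\<close>

definition Rtensor :: "metric \<Rightarrow> nat \<Rightarrow> nat \<Rightarrow> nat \<Rightarrow> nat \<Rightarrow> complex \<Rightarrow> real" where
  "Rtensor g k l a b w = pd a (chr g k b l) w - pd b (chr g k a l) w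
     + (\<Sum>m\<in>{1,2}. chr g k a m w * chr g m b l w - chr g k b m w * chr g m a l w)"

lemma riem_Rtensor: "riem g l w = Rtensor g l 2 1 2 w"
  by (simp add: riem_def Rtensor_def sum12 algebra_simps)

context chart_metric
begin

text \<open>Lowering the first index, the curvature tensor is antisymmetric in its first two
  indices (consequence of metric compatibility and Schwarz).\<close>

lemma riemann_antisym:
  assumes w: "w \<in> U" and kl: "k \<in> {1,2}" "l \<in> {1,2}"
  shows "(\<Sum>m\<in>{1,2}. g k m w * Rtensor g m l 1 2 w) + (\<Sum>m\<in>{1,2}. g l m w * Rtensor g m k 1 2 w) = 0"
proof -
  define H where "H b v = (\<Sum>m\<in>{1,2}. g m l v * chr g m b k v + g k m v * chr g m b l v)" for b v
  have pdH: "pd a (pd b (g k l)) w = (\<Sum>m\<in>{1,2}. g m l w * pd a (chr g m b k) w + pd a (g m l) w * chr g m b k w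
          + (g k m w * pd a (chr g m b l) w + pd a (g k m) w * chr g m b l w))"
    if b: "b \<in> {1,2}" for a b
  proof -
    have "pd a (pd b (g k l)) w = pd a (H b) w"
      by (rule pd_local[OF U_open w]) (unfold H_def, rule metric_compat[OF _ kl b], assumption)
    also have "\<dots> = (\<Sum>m\<in>{1,2}. pd a (\<lambda>v. g m l v * chr g m b k v + g k m v * chr g m b l v) w)"
      unfolding H_def[abs_def] using kl b
      by (intro pd_sum12) (auto intro!: differentiable_add differentiable_mult g_diff w chr_diff)
    also have "\<dots> = (\<Sum>m\<in>{1,2}. g m l w * pd a (chr g m b k) w + pd a (g m l) w * chr g m b k w
          + (g k m w * pd a (chr g m b l) w + pd a (g k m) w * chr g m b l w))"
      using kl b
      by (intro sum.cong refl, subst pd_add)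
         (auto intro!: differentiable_add differentiable_mult g_diff w chr_diff simp: pd_mult g_diff chr_diff w)
    finally show ?thesis .
  qed
  have sw: "pd 1 (pd 2 (g k l)) w = pd 2 (pd 1 (g k l)) w"
    using schwarz_smooth[OF g_entry_smooth[OF kl] U_open w] .
  have cps: "pd a (chr g m 2 1) w = pd a (chr g m 1 2) w" for a m
    by (rule pd_local[OF U_open w]) (simp add: chr_sym)
  have s: "g 2 1 w = g 1 2 w" using g_sym w by simp
  have c1: "pd a (g m n) w = (\<Sum>p\<in>{1,2}. g p n w * chr g p a m w + g m p w * chr g p a n w)"
    if "a \<in> {1,2}" "m \<in> {1,2}" "n \<in> {1,2}" for a m n
    using metric_compat[OF w that(2,3,1)] .
  have cs21: "chr g p 2 1 w = chr g p 1 2 w" for p using chr_sym[OF w] by simp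
  have eq: "(\<Sum>m\<in>{1,2}. g m l w * pd 1 (chr g m 2 k) w + pd 1 (g m l) w * chr g m 2 k w
          + (g k m w * pd 1 (chr g m 2 l) w + pd 1 (g k m) w * chr g m 2 l w))
        = (\<Sum>m\<in>{1,2}. g m l w * pd 2 (chr g m 1 k) w + pd 2 (g m l) w * chr g m 1 k w
          + (g k m w * pd 2 (chr g m 1 l) w + pd 2 (g k m) w * chr g m 1 l w))"
    using pdH[of 2 1] pdH[of 1 2] sw by simp
  from kl have "k = 1 \<or> k = 2" "l = 1 \<or> l = 2" by auto
  then show ?thesis using eq
    apply (elim disjE)
    apply (simp_all only: sum12 c1 Rtensor_def cps s cs21 insert_iff singleton_iff refl simp_thms)
    apply (simp_all add: algebra_simps)
    done
qed

lemma lowered_curvature: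
  assumes w: "w \<in> U"
  shows "g 1 1 w * Rtensor g 1 1 1 2 w + g 1 2 w * Rtensor g 2 1 1 2 w = 0"
    and "g 1 2 w * Rtensor g 1 2 1 2 w + g 2 2 w * Rtensor g 2 2 1 2 w = 0"
    and "g 1 1 w * Rtensor g 1 2 1 2 w + g 1 2 w * Rtensor g 2 2 1 2 w = gauss_curv g w * detg g w"
    and "g 1 2 w * Rtensor g 1 1 1 2 w + g 2 2 w * Rtensor g 2 1 1 2 w = - gauss_curv g w * detg g w"
proof -
  have s: "g 2 1 w = g 1 2 w" using g_sym w by simp
  show "g 1 1 w * Rtensor g 1 1 1 2 w + g 1 2 w * Rtensor g 2 1 1 2 w = 0"
    using riemann_antisym[OF w, of 1 1] by (simp add: sum12)
  show "g 1 2 w * Rtensor g 1 2 1 2 w + g 2 2 w * Rtensor g 2 2 1 2 w = 0"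
    using riemann_antisym[OF w, of 2 2] by (simp add: sum12 s)
  have kappa: "gauss_curv g w * detg g w = g 1 1 w * Rtensor g 1 2 1 2 w + g 1 2 w * Rtensor g 2 2 1 2 w"
    using det_nz[OF w] by (simp add: gauss_curv_def sum12 riem_Rtensor)
  then show "g 1 1 w * Rtensor g 1 2 1 2 w + g 1 2 w * Rtensor g 2 2 1 2 w = gauss_curv g w * detg g w"
    by simp
  show "g 1 2 w * Rtensor g 1 1 1 2 w + g 2 2 w * Rtensor g 2 1 1 2 w = - gauss_curv g w * detg g w"
    using riemann_antisym[OF w, of 1 2] kappa by (simp add: sum12 s)
qed

lemma gauss_curv_tensor:
  assumes w: "w \<in> U"
  shows "(\<Sum>k\<in>{1,2}. \<Sum>j\<in>{1,2}. g k j w *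
           (\<Sum>a\<in>{1,2}. \<Sum>b\<in>{1,2}. \<Sum>l\<in>{1,2}. coord a u * coord b u2 * coord l v * Rtensor g k l a b w) * coord j y)
       = gauss_curv g w * (gM g w u2 v * gM g w u y - gM g w u v * gM g w u2 y)"
proof -
  have s: "g 2 1 w = g 1 2 w" using g_sym w by simp
  have r0: "Rtensor g k l a a w = 0" for k l a by (simp add: Rtensor_def)
  have r21: "Rtensor g k l 2 1 w = - Rtensor g k l 1 2 w" for k l by (simp add: Rtensor_def sum12 algebra_simps)
  let ?area = "coord 1 u * coord 2 u2 - coord 2 u * coord 1 u2"
  have "(\<Sum>k\<in>{1,2}. \<Sum>j\<in>{1,2}. g k j w *
           (\<Sum>a\<in>{1,2}. \<Sum>b\<in>{1,2}. \<Sum>l\<in>{1,2}. coord a u * coord b u2 * coord l v * Rtensor g k l a b w) * coord j y)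
      = ?area * (coord 1 y * coord 1 v * (g 1 1 w * Rtensor g 1 1 1 2 w + g 1 2 w * Rtensor g 2 1 1 2 w)
          + coord 1 y * coord 2 v * (g 1 1 w * Rtensor g 1 2 1 2 w + g 1 2 w * Rtensor g 2 2 1 2 w)
          + coord 2 y * coord 1 v * (g 1 2 w * Rtensor g 1 1 1 2 w + g 2 2 w * Rtensor g 2 1 1 2 w)
          + coord 2 y * coord 2 v * (g 1 2 w * Rtensor g 1 2 1 2 w + g 2 2 w * Rtensor g 2 2 1 2 w))"
    by (simp only: sum12 r0 r21 s) (simp add: algebra_simps)
  also have "\<dots> = gauss_curv g w * detg g w * ?area * (coord 1 y * coord 2 v - coord 2 y * coord 1 v)"
    unfolding lowered_curvature[OF w] by (simp add: algebra_simps)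
  also have "\<dots> = gauss_curv g w * (gM g w u2 v * gM g w u y - gM g w u v * gM g w u2 y)"
    by (simp add: gM_def detg_def sum12 s algebra_simps)
  finally show ?thesis .
qed

end

section \<open>Tangent vectors of M^2 x R along an immersion\<close>

definition dX :: "(complex \<Rightarrow> complex) \<Rightarrow> nat \<Rightarrow> nat \<Rightarrow> complex \<Rightarrow> real" where
  "dX X i a z = pd i (\<lambda>v. coord a (X v)) z"

definition gprod :: "metric \<Rightarrow> complex \<Rightarrow> (nat \<Rightarrow> real) \<Rightarrow> (nat \<Rightarrow> real) \<Rightarrow> real" where
  "gprod g w u v = (\<Sum>a\<in>{1,2}. \<Sum>b\<in>{1,2}. g a b w * u a * v b) + u 3 * v 3"

definition covd :: "metric \<Rightarrow> (complex \<Rightarrow> complex) \<Rightarrow> nat \<Rightarrow> (nat \<Rightarrow> complex \<Rightarrow> real) \<Rightarrow> complex \<Rightarrow> nat \<Rightarrow> real" where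
  "covd g X i V z k = (if k = 3 then pd i (V 3) z
      else pd i (V k) z + (\<Sum>a\<in>{1,2}. \<Sum>b\<in>{1,2}. chr g k a b (X z) * dX X i a z * V b z))"

definition field_at :: "(nat \<Rightarrow> complex \<Rightarrow> real) \<Rightarrow> complex \<Rightarrow> nat \<Rightarrow> real" where
  "field_at V z = (\<lambda>k. V k z)"

definition covd_field :: "metric \<Rightarrow> (complex \<Rightarrow> complex) \<Rightarrow> nat \<Rightarrow> (nat \<Rightarrow> complex \<Rightarrow> real) \<Rightarrow> nat \<Rightarrow> complex \<Rightarrow> real" where
  "covd_field g X i V = (\<lambda>k z. covd g X i V z k)"

definition fields_diff :: "(nat \<Rightarrow> complex \<Rightarrow> real) \<Rightarrow> complex \<Rightarrow> bool" where
  "fields_diff V z \<longleftrightarrow> V 1 differentiable (at z) \<and> V 2 differentiable (at z) \<and> V 3 differentiable (at z)"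

lemma gprod_expand: "gprod g w u v = g 1 1 w * u 1 * v 1 + g 1 2 w * u 1 * v 2 + g 2 1 w * u 2 * v 1
   + g 2 2 w * u 2 * v 2 + u 3 * v 3"
  by (simp only: gprod_def sum12 add.assoc)

lemma gprod_diff_left: "gprod g w A P - gprod g w B P = gprod g w (\<lambda>k. A k - B k) P"
  by (simp add: gprod_expand algebra_simps)

lemma gprod_lin1: "gprod g w (\<lambda>k. a * A k + b * B k + c * C k + d * D k) Y
    = a * gprod g w A Y + b * gprod g w B Y + c * gprod g w C Y + d * gprod g w D Y"
  by (simp add: gprod_expand algebra_simps)

lemma gprod_lin2: "gprod g w Y (\<lambda>k. a * A k + b * B k + c * C k + d * D k)
    = a * gprod g w Y A + b * gprod g w Y B + c * gprod g w Y C + d * gprod g w Y D"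
  by (simp add: gprod_expand algebra_simps)

lemma field_at_simps: "field_at V z k = V k z" by (simp add: field_at_def)

lemma covd_field_simps: "covd_field g X i V k z = covd g X i V z k" by (simp add: covd_field_def)

lemma covd_1: "covd g X i V z 1 = pd i (V 1) z + (chr g 1 1 1 (X z) * dX X i 1 z * V 1 z
   + chr g 1 1 2 (X z) * dX X i 1 z * V 2 z + chr g 1 2 1 (X z) * dX X i 2 z * V 1 z
   + chr g 1 2 2 (X z) * dX X i 2 z * V 2 z)"
  by (simp only: covd_def sum12, simp add: algebra_simps)

lemma covd_2: "covd g X i V z 2 = pd i (V 2) z + (chr g 2 1 1 (X z) * dX X i 1 z * V 1 z
   + chr g 2 1 2 (X z) * dX X i 1 z * V 2 z + chr g 2 2 1 (X z) * dX X i 2 z * V 1 z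
   + chr g 2 2 2 (X z) * dX X i 2 z * V 2 z)"
  by (simp only: covd_def sum12, simp add: algebra_simps)

lemma covd_3: "covd g X i V z 3 = pd i (V 3) z"
  by (simp add: covd_def)

text \<open>Determinants of 3x3 matrices, used to show that (P1, P2, N) is a basis.\<close>

definition det3 :: "real \<Rightarrow> real \<Rightarrow> real \<Rightarrow> real \<Rightarrow> real \<Rightarrow> real \<Rightarrow> real \<Rightarrow> real \<Rightarrow> real \<Rightarrow> real" where
  "det3 a11 a12 a13 a21 a22 a23 a31 a32 a33 = a11*(a22*a33 - a23*a32) - a12*(a21*a33 - a23*a31) + a13*(a21*a32 - a22*a31)"

lemma det3_mult:
  "det3 a11 a12 a13 a21 a22 a23 a31 a32 a33 * det3 b11 b12 b13 b21 b22 b23 b31 b32 b33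
   = det3 (a11*b11+a12*b21+a13*b31) (a11*b12+a12*b22+a13*b32) (a11*b13+a12*b23+a13*b33)
          (a21*b11+a22*b21+a23*b31) (a21*b12+a22*b22+a23*b32) (a21*b13+a22*b23+a23*b33)
          (a31*b11+a32*b21+a33*b31) (a31*b12+a32*b22+a33*b32) (a31*b13+a32*b23+a33*b33)"
  unfolding det3_def by (simp add: algebra_simps)

lemma adj3:
  assumes "a11*x1+a12*x2+a13*x3 = 0" "a21*x1+a22*x2+a23*x3 = 0" "a31*x1+a32*x2+a33*x3 = 0"
  shows "det3 a11 a12 a13 a21 a22 a23 a31 a32 a33 * x1 = 0"
    "det3 a11 a12 a13 a21 a22 a23 a31 a32 a33 * x2 = 0"
    "det3 a11 a12 a13 a21 a22 a23 a31 a32 a33 * x3 = 0"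
proof -
  have "det3 a11 a12 a13 a21 a22 a23 a31 a32 a33 * x1 = (a22*a33 - a23*a32)*(a11*x1+a12*x2+a13*x3)
     - (a12*a33 - a13*a32)*(a21*x1+a22*x2+a23*x3) + (a12*a23 - a13*a22)*(a31*x1+a32*x2+a33*x3)"
    unfolding det3_def by (simp add: algebra_simps)
  then show "det3 a11 a12 a13 a21 a22 a23 a31 a32 a33 * x1 = 0" using assms by simp
  have "det3 a11 a12 a13 a21 a22 a23 a31 a32 a33 * x2 = - (a21*a33 - a23*a31)*(a11*x1+a12*x2+a13*x3)
     + (a11*a33 - a13*a31)*(a21*x1+a22*x2+a23*x3) - (a11*a23 - a13*a21)*(a31*x1+a32*x2+a33*x3)"
    unfolding det3_def by (simp add: algebra_simps)
  then show "det3 a11 a12 a13 a21 a22 a23 a31 a32 a33 * x2 = 0" using assms by simp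
  have "det3 a11 a12 a13 a21 a22 a23 a31 a32 a33 * x3 = (a21*a32 - a22*a31)*(a11*x1+a12*x2+a13*x3)
     - (a11*a32 - a12*a31)*(a21*x1+a22*x2+a23*x3) + (a11*a22 - a12*a21)*(a31*x1+a32*x2+a33*x3)"
    unfolding det3_def by (simp add: algebra_simps)
  then show "det3 a11 a12 a13 a21 a22 a23 a31 a32 a33 * x3 = 0" using assms by simp
qed

context chart_metric
begin

lemma gprod_sym: "w \<in> U \<Longrightarrow> gprod g w u v = gprod g w v u"
  using g_sym by (simp add: gprod_expand algebra_simps)

lemma frame_zero:
  assumes w: "w \<in> U"
    and nP1: "gprod g w N P1 = 0" and nP2: "gprod g w N P2 = 0" and nN: "gprod g w N N = 1"
    and dI: "gprod g w P1 P1 * gprod g w P2 P2 - gprod g w P1 P2 * gprod g w P1 P2 \<noteq> 0"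
    and W1: "gprod g w W P1 = 0" and W2: "gprod g w W P2 = 0" and W3: "gprod g w W N = 0"
  shows "W 1 = 0 \<and> W 2 = 0 \<and> W 3 = 0"
proof -
  have s: "g 2 1 w = g 1 2 w" using g_sym w by simp
  define x1 where "x1 = g 1 1 w * W 1 + g 1 2 w * W 2"
  define x2 where "x2 = g 1 2 w * W 1 + g 2 2 w * W 2"
  define x3 where "x3 = W 3"
  have Gx: "gprod g w W Y = Y 1 * x1 + Y 2 * x2 + Y 3 * x3" for Y
    by (simp add: gprod_expand x1_def x2_def x3_def s algebra_simps)
  have GB: "gprod g w Y Z = Y 1 * (g 1 1 w * Z 1 + g 1 2 w * Z 2) + Y 2 * (g 1 2 w * Z 1 + g 2 2 w * Z 2) + Y 3 * Z 3" for Y Z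
    by (simp add: gprod_expand s algebra_simps)
  define dA where "dA = det3 (P1 1) (P1 2) (P1 3) (P2 1) (P2 2) (P2 3) (N 1) (N 2) (N 3)"
  have ax: "dA * x1 = 0" "dA * x2 = 0" "dA * x3 = 0"
    using adj3[of "P1 1" x1 "P1 2" x2 "P1 3" x3 "P2 1" "P2 2" "P2 3" "N 1" "N 2" "N 3"]
      W1 W2 W3 Gx unfolding dA_def by (simp_all add: algebra_simps)
  note sym = gprod_sym[OF w]
  have prod: "dA * det3 (g 1 1 w * P1 1 + g 1 2 w * P1 2) (g 1 1 w * P2 1 + g 1 2 w * P2 2) (g 1 1 w * N 1 + g 1 2 w * N 2)
          (g 1 2 w * P1 1 + g 2 2 w * P1 2) (g 1 2 w * P2 1 + g 2 2 w * P2 2) (g 1 2 w * N 1 + g 2 2 w * N 2)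
          (P1 3) (P2 3) (N 3)
      = det3 (gprod g w P1 P1) (gprod g w P1 P2) (gprod g w P1 N) (gprod g w P2 P1) (gprod g w P2 P2) (gprod g w P2 N)
          (gprod g w N P1) (gprod g w N P2) (gprod g w N N)"
    unfolding dA_def det3_mult GB ..
  also have "\<dots> = gprod g w P1 P1 * gprod g w P2 P2 - gprod g w P1 P2 * gprod g w P1 P2"
    using nP1 nP2 nN sym[of P1 N] sym[of P2 N] sym[of P2 P1] by (simp add: det3_def)
  finally have "dA \<noteq> 0" using dI by auto
  then have x0: "x1 = 0" "x2 = 0" "x3 = 0" using ax by simp_all
  have dg: "g 1 1 w * g 2 2 w - g 1 2 w * g 1 2 w \<noteq> 0" using det_nz[OF w] s by (simp add: detg_def)
  have "(g 1 1 w * g 2 2 w - g 1 2 w * g 1 2 w) * W 1 = g 2 2 w * x1 - g 1 2 w * x2"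
    by (simp add: x1_def x2_def algebra_simps)
  then have a: "W 1 = 0" using x0 dg by simp
  have "(g 1 1 w * g 2 2 w - g 1 2 w * g 1 2 w) * W 2 = g 1 1 w * x2 - g 1 2 w * x1"
    by (simp add: x1_def x2_def algebra_simps)
  then have b: "W 2 = 0" using x0 dg by simp
  show ?thesis using a b x0 x3_def by simp
qed

lemma frame_expansion_general:
  assumes w: "w \<in> U"
    and nP1: "gprod g w N P1 = 0" and nP2: "gprod g w N P2 = 0" and nN: "gprod g w N N = 1"
    and dI: "gprod g w P1 P1 * gprod g w P2 P2 - gprod g w P1 P2 * gprod g w P1 P2 \<noteq> 0"
  shows "gprod g w Y V = (gprod g w P2 P2 * gprod g w V P1 * gprod g w Y P1
       - gprod g w P1 P2 * (gprod g w V P1 * gprod g w Y P2 + gprod g w V P2 * gprod g w Y P1)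
       + gprod g w P1 P1 * gprod g w V P2 * gprod g w Y P2) / (gprod g w P1 P1 * gprod g w P2 P2 - gprod g w P1 P2 * gprod g w P1 P2)
       + gprod g w V N * gprod g w Y N"
proof -
  note sym = gprod_sym[OF w]
  define d where "d = gprod g w P1 P1 * gprod g w P2 P2 - gprod g w P1 P2 * gprod g w P1 P2"
  define a1 where "a1 = gprod g w V P1"
  define a2 where "a2 = gprod g w V P2"
  define c where "c = gprod g w V N"
  define \<gamma>1 where "\<gamma>1 = (gprod g w P2 P2 * a1 - gprod g w P1 P2 * a2) / d"
  define \<gamma>2 where "\<gamma>2 = (gprod g w P1 P1 * a2 - gprod g w P1 P2 * a1) / d"
  define W where "W = (\<lambda>k. 1 * V k + (- \<gamma>1) * P1 k + (- \<gamma>2) * P2 k + (- c) * N k)"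
  have dn: "d \<noteq> 0" using dI d_def by simp
  have "gprod g w W P1 = a1 - \<gamma>1 * gprod g w P1 P1 - \<gamma>2 * gprod g w P1 P2"
    unfolding W_def gprod_lin1 using nP1 sym[of P2 P1] a1_def by simp
  also have "\<dots> = 0" using dn by (simp add: \<gamma>1_def \<gamma>2_def d_def field_simps)
  finally have w1: "gprod g w W P1 = 0" .
  have "gprod g w W P2 = a2 - \<gamma>1 * gprod g w P1 P2 - \<gamma>2 * gprod g w P2 P2"
    unfolding W_def gprod_lin1 using nP2 a2_def by simp
  also have "\<dots> = 0" using dn by (simp add: \<gamma>1_def \<gamma>2_def d_def field_simps)
  finally have w2: "gprod g w W P2 = 0" .
  have w3: "gprod g w W N = 0"
    unfolding W_def gprod_lin1 using nN nP1 nP2 sym[of P1 N] sym[of P2 N] c_def by simp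
  have W0: "W 1 = 0 \<and> W 2 = 0 \<and> W 3 = 0" by (rule frame_zero[OF w nP1 nP2 nN dI w1 w2 w3])
  have "gprod g w Y V = gprod g w Y (\<lambda>k. \<gamma>1 * P1 k + \<gamma>2 * P2 k + c * N k + 1 * W k)"
    using W0 by (simp add: gprod_expand W_def)
  also have "\<dots> = \<gamma>1 * gprod g w Y P1 + \<gamma>2 * gprod g w Y P2 + c * gprod g w Y N"
    unfolding gprod_lin2 using W0 by (simp add: gprod_expand)
  also have "\<dots> = (gprod g w P2 P2 * a1 * gprod g w Y P1
       - gprod g w P1 P2 * (a1 * gprod g w Y P2 + a2 * gprod g w Y P1)
       + gprod g w P1 P1 * a2 * gprod g w Y P2) / d + c * gprod g w Y N"
    using dn by (simp add: \<gamma>1_def \<gamma>2_def field_simps)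
  finally show ?thesis by (simp add: a1_def a2_def c_def d_def)
qed

end

locale immersed_surface = chart_metric g U for g U +
  fixes \<Omega> :: "complex set" and X :: "complex \<Rightarrow> complex" and h :: "complex \<Rightarrow> real"
    and NM :: "complex \<Rightarrow> complex" and \<nu> :: "complex \<Rightarrow> real"
  assumes \<Omega>_open: "open \<Omega>"
    and X_smooth: "smooth_on \<Omega> X" and h_smooth: "smooth_on \<Omega> h"
    and X_in: "X ` \<Omega> \<subseteq> U"
    and NM_smooth: "smooth_on \<Omega> NM" and \<nu>_smooth: "smooth_on \<Omega> \<nu>"
begin

lemma Xz: "z \<in> \<Omega> \<Longrightarrow> X z \<in> U" using X_in by auto

lemma X_diff: "z \<in> \<Omega> \<Longrightarrow> X differentiable (at z)" using smooth_d0[OF X_smooth] .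

lemma gX_diff: "z \<in> \<Omega> \<Longrightarrow> a \<in> {1,2} \<Longrightarrow> b \<in> {1,2} \<Longrightarrow> (\<lambda>v. g a b (X v)) differentiable (at z)"
  by (rule differentiable_compose[OF g_diff[OF Xz] X_diff])

lemma chrX_diff: "z \<in> \<Omega> \<Longrightarrow> k \<in> {1,2} \<Longrightarrow> a \<in> {1,2} \<Longrightarrow> b \<in> {1,2} \<Longrightarrow> (\<lambda>v. chr g k a b (X v)) differentiable (at z)"
  by (rule differentiable_compose[OF chr_diff[OF Xz] X_diff])

lemma dX_pd: "z \<in> \<Omega> \<Longrightarrow> dX X i a z = coord a (pd i X z)"
  unfolding dX_def by (rule pd_coord[OF X_diff])

lemma pd_gX:
  assumes z: "z \<in> \<Omega>" and ab: "a \<in> {1,2}" "b \<in> {1,2}"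
  shows "pd i (\<lambda>v. g a b (X v)) z = pd 1 (g a b) (X z) * dX X i 1 z + pd 2 (g a b) (X z) * dX X i 2 z"
  using pd_comp[OF g_diff[OF Xz[OF z] ab] X_diff[OF z]] dX_pd[OF z] by (simp add: coord_def)

lemma pd_chrX:
  assumes z: "z \<in> \<Omega>" and kab: "k \<in> {1,2}" "a \<in> {1,2}" "b \<in> {1,2}"
  shows "pd i (\<lambda>v. chr g k a b (X v)) z = pd 1 (chr g k a b) (X z) * dX X i 1 z + pd 2 (chr g k a b) (X z) * dX X i 2 z"
  using pd_comp[OF chr_diff[OF Xz[OF z] kab] X_diff[OF z]] dX_pd[OF z] by (simp add: coord_def)

lemma metric_compat_along:
  assumes z: "z \<in> \<Omega>" and ab: "a \<in> {1,2}" "b \<in> {1,2}"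
  shows "pd i (\<lambda>v. g a b (X v)) z = (\<Sum>c\<in>{1,2}. (\<Sum>m\<in>{1,2}. g m b (X z) * chr g m c a (X z) + g a m (X z) * chr g m c b (X z)) * dX X i c z)"
  using pd_gX[OF z ab] metric_compat[OF Xz[OF z] ab] by (simp add: sum12)

lemma gprod_product_rule:
  assumes z: "z \<in> \<Omega>" and V: "fields_diff V z" and W: "fields_diff W z"
  shows "pd i (\<lambda>v. gprod g (X v) (field_at V v) (field_at W v)) z
     = gprod g (X z) (covd g X i V z) (field_at W z) + gprod g (X z) (field_at V z) (covd g X i W z)"
proof -
  have dV: "V 1 differentiable (at z)" "V 2 differentiable (at z)" "V 3 differentiable (at z)"
    using V by (auto simp: fields_diff_def)
  have dW: "W 1 differentiable (at z)" "W 2 differentiable (at z)" "W 3 differentiable (at z)"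
    using W by (auto simp: fields_diff_def)
  have dg: "(\<lambda>v. g 1 1 (X v)) differentiable (at z)" "(\<lambda>v. g 1 2 (X v)) differentiable (at z)"
     "(\<lambda>v. g 2 1 (X v)) differentiable (at z)" "(\<lambda>v. g 2 2 (X v)) differentiable (at z)"
    using gX_diff[OF z] by auto
  have e: "(\<lambda>v. gprod g (X v) (field_at V v) (field_at W v)) = (\<lambda>v. g 1 1 (X v) * V 1 v * W 1 v + g 1 2 (X v) * V 1 v * W 2 v
     + g 2 1 (X v) * V 2 v * W 1 v + g 2 2 (X v) * V 2 v * W 2 v + V 3 v * W 3 v)"
    by (simp only: gprod_expand field_at_def)
  have "pd i (\<lambda>v. gprod g (X v) (field_at V v) (field_at W v)) z =
      pd i (\<lambda>v. g 1 1 (X v)) z * V 1 z * W 1 z + g 1 1 (X z) * pd i (V 1) z * W 1 z + g 1 1 (X z) * V 1 z * pd i (W 1) z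
    + (pd i (\<lambda>v. g 1 2 (X v)) z * V 1 z * W 2 z + g 1 2 (X z) * pd i (V 1) z * W 2 z + g 1 2 (X z) * V 1 z * pd i (W 2) z)
    + (pd i (\<lambda>v. g 2 1 (X v)) z * V 2 z * W 1 z + g 2 1 (X z) * pd i (V 2) z * W 1 z + g 2 1 (X z) * V 2 z * pd i (W 1) z)
    + (pd i (\<lambda>v. g 2 2 (X v)) z * V 2 z * W 2 z + g 2 2 (X z) * pd i (V 2) z * W 2 z + g 2 2 (X z) * V 2 z * pd i (W 2) z)
    + (pd i (V 3) z * W 3 z + V 3 z * pd i (W 3) z)"
    unfolding e
    by (simp add: pd_add pd_mult3 pd_mult dV dW dg)
  also have "\<dots> = gprod g (X z) (covd g X i V z) (field_at W z) + gprod g (X z) (field_at V z) (covd g X i W z)"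
    apply (simp only: metric_compat_along[OF z] insert_iff simp_thms gprod_expand covd_1 covd_2 covd_3 field_at_def sum12)
    apply (simp add: algebra_simps)
    done
  finally show ?thesis .
qed

end

definition dpsi :: "(complex \<Rightarrow> complex) \<Rightarrow> (complex \<Rightarrow> real) \<Rightarrow> nat \<Rightarrow> nat \<Rightarrow> complex \<Rightarrow> real" where
  "dpsi X h j = (\<lambda>k z. if k = 3 then pd j h z else dX X j k z)"

definition nfield :: "(complex \<Rightarrow> complex) \<Rightarrow> (complex \<Rightarrow> real) \<Rightarrow> nat \<Rightarrow> complex \<Rightarrow> real" where
  "nfield NM \<nu> = (\<lambda>k z. if k = 3 then \<nu> z else coord k (NM z))"

lemma dpsi_simps: "dpsi X h j 3 z = pd j h z" "dpsi X h j 1 z = dX X j 1 z" "dpsi X h j 2 z = dX X j 2 z"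
  by (simp_all add: dpsi_def)

lemma nfield_simps: "nfield NM \<nu> 3 z = \<nu> z" "nfield NM \<nu> 1 z = coord 1 (NM z)" "nfield NM \<nu> 2 z = coord 2 (NM z)"
  by (simp_all add: nfield_def)

context immersed_surface
begin

lemma smooth_Xc: "smooth_on \<Omega> (\<lambda>v. coord a (X v))"
  by (rule smooth_coord[OF X_smooth \<Omega>_open])

lemma smooth_Nc: "smooth_on \<Omega> (\<lambda>v. coord a (NM v))"
  by (rule smooth_coord[OF NM_smooth \<Omega>_open])

lemma dX_diff: "z \<in> \<Omega> \<Longrightarrow> dX X j a differentiable (at z)"
proof -
  assume z: "z \<in> \<Omega>"
  have "dX X j a = pd j (\<lambda>v. coord a (X v))" by (simp add: dX_def[abs_def])
  then show ?thesis using smooth_d1[OF smooth_Xc z] by simp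
qed

lemma dpsi_diff: "z \<in> \<Omega> \<Longrightarrow> fields_diff (dpsi X h j) z"
proof -
  assume z: "z \<in> \<Omega>"
  have a: "dpsi X h j 1 = dX X j 1" "dpsi X h j 2 = dX X j 2" "dpsi X h j 3 = pd j h"
    by (auto simp: dpsi_def)
  show ?thesis unfolding fields_diff_def a using dX_diff[OF z] smooth_d1[OF h_smooth z] by simp
qed

lemma nfield_diff: "z \<in> \<Omega> \<Longrightarrow> fields_diff (nfield NM \<nu>) z"
proof -
  assume z: "z \<in> \<Omega>"
  have a: "nfield NM \<nu> 1 = (\<lambda>v. coord 1 (NM v))" "nfield NM \<nu> 2 = (\<lambda>v. coord 2 (NM v))" "nfield NM \<nu> 3 = \<nu>"
    by (auto simp: nfield_def)
  show ?thesis unfolding fields_diff_def a using smooth_d0[OF smooth_Nc z] smooth_d0[OF \<nu>_smooth z] by simp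
qed

lemma dpsi_smooth: "smooth_on \<Omega> (dpsi X h j 1)" "smooth_on \<Omega> (dpsi X h j 2)" "smooth_on \<Omega> (dpsi X h j 3)"
proof -
  have a: "dpsi X h j 1 = pd j (\<lambda>v. coord 1 (X v))" "dpsi X h j 2 = pd j (\<lambda>v. coord 2 (X v))" "dpsi X h j 3 = pd j h"
    by (auto simp: dpsi_def dX_def[abs_def])
  show "smooth_on \<Omega> (dpsi X h j 1)" "smooth_on \<Omega> (dpsi X h j 2)" "smooth_on \<Omega> (dpsi X h j 3)"
    unfolding a by (auto intro: smooth_pd smooth_Xc h_smooth)
qed

lemma nfield_smooth: "smooth_on \<Omega> (nfield NM \<nu> 1)" "smooth_on \<Omega> (nfield NM \<nu> 2)" "smooth_on \<Omega> (nfield NM \<nu> 3)"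
proof -
  have a: "nfield NM \<nu> 1 = (\<lambda>v. coord 1 (NM v))" "nfield NM \<nu> 2 = (\<lambda>v. coord 2 (NM v))" "nfield NM \<nu> 3 = \<nu>"
    by (auto simp: nfield_def)
  show "smooth_on \<Omega> (nfield NM \<nu> 1)" "smooth_on \<Omega> (nfield NM \<nu> 2)" "smooth_on \<Omega> (nfield NM \<nu> 3)"
    unfolding a by (auto intro: smooth_Nc \<nu>_smooth)
qed

lemma covd_field_diff:
  assumes z: "z \<in> \<Omega>" and V: "smooth_on \<Omega> (V 1)" "smooth_on \<Omega> (V 2)" "smooth_on \<Omega> (V 3)"
  shows "fields_diff (covd_field g X i V) z"
proof -
  have dc: "(\<lambda>v. chr g k a b (X v)) differentiable (at z)" if "k \<in> {1,2}" "a \<in> {1,2}" "b \<in> {1,2}" for k a b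
    using chrX_diff[OF z that] .
  have dx: "dX X i a differentiable (at z)" for a using dX_diff[OF z] .
  have dV: "V b differentiable (at z)" if "b \<in> {1,2}" for b using that smooth_d0[OF V(1) z] smooth_d0[OF V(2) z] by auto
  have k12: "(\<lambda>v. covd g X i V v k) differentiable (at z)" if k: "k \<in> {1,2}" for k
  proof -
    have e: "(\<lambda>v. covd g X i V v k) = (\<lambda>v. pd i (V k) v + (\<Sum>a\<in>{1,2}. \<Sum>b\<in>{1,2}. chr g k a b (X v) * dX X i a v * V b v))"
      using k by (auto simp: covd_def)
    have "pd i (V k) differentiable (at z)" using k smooth_d1[OF V(1) z] smooth_d1[OF V(2) z] by auto
    then show ?thesis unfolding e using k
      by (intro differentiable_add differentiable_sum ballI differentiable_mult dc dx dV) auto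
  qed
  have k3: "(\<lambda>v. covd g X i V v 3) differentiable (at z)"
    using smooth_d1[OF V(3) z] by (simp add: covd_def)
  show ?thesis unfolding fields_diff_def covd_field_def using k12[of 1] k12[of 2] k3 by simp
qed

lemma gprod_diff:
  assumes z: "z \<in> \<Omega>" and V: "fields_diff V z" and W: "fields_diff W z"
  shows "(\<lambda>v. gprod g (X v) (field_at V v) (field_at W v)) differentiable (at z)"
proof -
  have e: "(\<lambda>v. gprod g (X v) (field_at V v) (field_at W v)) = (\<lambda>v. g 1 1 (X v) * V 1 v * W 1 v + g 1 2 (X v) * V 1 v * W 2 v
     + g 2 1 (X v) * V 2 v * W 1 v + g 2 2 (X v) * V 2 v * W 2 v + V 3 v * W 3 v)"
    by (simp only: gprod_expand field_at_def)
  show ?thesis unfolding e using V W gX_diff[OF z] by (simp add: fields_diff_def)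
qed

lemma I_gprod:
  assumes z: "z \<in> \<Omega>"
  shows "Ifund g X h z i j = gprod g (X z) (field_at (dpsi X h i) z) (field_at (dpsi X h j) z)"
  by (simp add: Ifund_def gM_def gprod_def sum12 field_at_simps dpsi_simps dX_pd[OF z])

lemma pd_dX: "z \<in> \<Omega> \<Longrightarrow> pd i (dX X j a) z = coord a (pd i (pd j X) z)"
proof -
  assume z: "z \<in> \<Omega>"
  have "pd i (dX X j a) z = pd i (\<lambda>v. coord a (pd j X v)) z"
    by (rule pd_local[OF \<Omega>_open z]) (simp add: dX_pd)
  also have "\<dots> = coord a (pd i (pd j X) z)" by (rule pd_coord[OF smooth_d1[OF X_smooth z]])
  finally show ?thesis .
qed

lemma II_gprod:
  assumes z: "z \<in> \<Omega>"
  shows "IIfund g X h NM \<nu> z i j = gprod g (X z) (field_at (covd_field g X i (dpsi X h j)) z) (field_at (nfield NM \<nu>) z)"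
proof -
  have a: "dpsi X h j 1 = dX X j 1" "dpsi X h j 2 = dX X j 2" "dpsi X h j 3 = pd j h"
    by (auto simp: dpsi_def)
  show ?thesis
    by (simp add: IIfund_def gM_def gprod_def sum12 field_at_simps nfield_simps covd_field_simps covd_def a pd_dX[OF z]
        cov2_def Let_def dX_pd[OF z] coord_def algebra_simps)
qed

lemma field_at_covd_field: "field_at (covd_field g X i V) z = covd g X i V z"
  by (simp add: field_at_def covd_field_def)

lemma I_differentiable:
  assumes z: "z \<in> \<Omega>"
  shows "(\<lambda>v. Ifund g X h v i j) differentiable (at z)"
  by (rule diff_local[OF gprod_diff[OF z dpsi_diff[OF z] dpsi_diff[OF z]] \<Omega>_open z]) (simp add: I_gprod)

lemma II_differentiable:
  assumes z: "z \<in> \<Omega>"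
  shows "(\<lambda>v. IIfund g X h NM \<nu> v i j) differentiable (at z)"
  by (rule diff_local[OF gprod_diff[OF z covd_field_diff[OF z dpsi_smooth] nfield_diff[OF z]] \<Omega>_open z]) (simp add: II_gprod)

lemma covd_dpsi_sym:
  assumes z: "z \<in> \<Omega>" and ij: "i \<in> {1,2}" "j \<in> {1,2}"
  shows "covd g X i (dpsi X h j) z = covd g X j (dpsi X h i) z"
proof
  fix k
  have a: "dpsi X h j 1 = dX X j 1" "dpsi X h j 2 = dX X j 2" "dpsi X h j 3 = pd j h"
    "dpsi X h i 1 = dX X i 1" "dpsi X h i 2 = dX X i 2" "dpsi X h i 3 = pd i h"
    by (auto simp: dpsi_def)
  have sX: "pd i (pd j X) z = pd j (pd i X) z" by (rule schwarz_smooth_c[OF X_smooth \<Omega>_open z])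
  have sh: "pd i (pd j h) z = pd j (pd i h) z" by (rule schwarz_smooth[OF h_smooth \<Omega>_open z])
  have cs: "chr g k' 2 1 (X z) = chr g k' 1 2 (X z)" for k' using chr_sym[OF Xz[OF z]] by simp
  show "covd g X i (dpsi X h j) z k = covd g X j (dpsi X h i) z k"
    by (simp add: covd_def a pd_dX[OF z] sX sh sum12 cs algebra_simps dpsi_def)
qed

lemma pd_covd:
  assumes z: "z \<in> \<Omega>" and k: "k \<in> {1,2}"
    and V1: "smooth_on \<Omega> (V 1)" and V2: "smooth_on \<Omega> (V 2)"
  shows "pd i (\<lambda>v. covd g X j V v k) z = pd i (pd j (V k)) z + (\<Sum>a\<in>{1,2}. \<Sum>b\<in>{1,2}.
      (pd 1 (chr g k a b) (X z) * dX X i 1 z + pd 2 (chr g k a b) (X z) * dX X i 2 z) * dX X j a z * V b z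
      + chr g k a b (X z) * coord a (pd i (pd j X) z) * V b z + chr g k a b (X z) * dX X j a z * pd i (V b) z)"
proof -
  have kk: "k \<noteq> 3" using k by auto
  have e: "(\<lambda>v. covd g X j V v k) = (\<lambda>v. pd j (V k) v + (chr g k 1 1 (X v) * dX X j 1 v * V 1 v
     + chr g k 1 2 (X v) * dX X j 1 v * V 2 v + chr g k 2 1 (X v) * dX X j 2 v * V 1 v
     + chr g k 2 2 (X v) * dX X j 2 v * V 2 v))"
    using kk by (simp add: covd_def sum12 algebra_simps)
  have dVk: "pd j (V k) differentiable (at z)" using k smooth_d1[OF V1 z] smooth_d1[OF V2 z] by auto
  have dV: "V 1 differentiable (at z)" "V 2 differentiable (at z)" using smooth_d0[OF V1 z] smooth_d0[OF V2 z] by auto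
  have dc: "(\<lambda>v. chr g k a b (X v)) differentiable (at z)" if "a \<in> {1,2}" "b \<in> {1,2}" for a b
    using chrX_diff[OF z k that] .
  have dc': "(\<lambda>v. chr g k 1 1 (X v)) differentiable (at z)" "(\<lambda>v. chr g k 1 2 (X v)) differentiable (at z)"
    "(\<lambda>v. chr g k 2 1 (X v)) differentiable (at z)" "(\<lambda>v. chr g k 2 2 (X v)) differentiable (at z)"
    using dc by auto
  have dx: "dX X j 1 differentiable (at z)" "dX X j 2 differentiable (at z)" using dX_diff[OF z] by auto
  have pc: "pd i (\<lambda>v. chr g k a b (X v)) z = pd 1 (chr g k a b) (X z) * dX X i 1 z + pd 2 (chr g k a b) (X z) * dX X i 2 z"
    if "a \<in> {1,2}" "b \<in> {1,2}" for a b using pd_chrX[OF z k that] .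
  have "pd i (\<lambda>v. covd g X j V v k) z = pd i (pd j (V k)) z
     + (pd i (\<lambda>v. chr g k 1 1 (X v)) z * dX X j 1 z * V 1 z + chr g k 1 1 (X z) * pd i (dX X j 1) z * V 1 z + chr g k 1 1 (X z) * dX X j 1 z * pd i (V 1) z)
     + (pd i (\<lambda>v. chr g k 1 2 (X v)) z * dX X j 1 z * V 2 z + chr g k 1 2 (X z) * pd i (dX X j 1) z * V 2 z + chr g k 1 2 (X z) * dX X j 1 z * pd i (V 2) z)
     + (pd i (\<lambda>v. chr g k 2 1 (X v)) z * dX X j 2 z * V 1 z + chr g k 2 1 (X z) * pd i (dX X j 2) z * V 1 z + chr g k 2 1 (X z) * dX X j 2 z * pd i (V 1) z)
     + (pd i (\<lambda>v. chr g k 2 2 (X v)) z * dX X j 2 z * V 2 z + chr g k 2 2 (X z) * pd i (dX X j 2) z * V 2 z + chr g k 2 2 (X z) * dX X j 2 z * pd i (V 2) z)"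
    unfolding e by (simp add: pd_add pd_mult3 dVk dV dc' dx add.assoc)
  also have "\<dots> = pd i (pd j (V k)) z + (\<Sum>a\<in>{1,2}. \<Sum>b\<in>{1,2}.
      (pd 1 (chr g k a b) (X z) * dX X i 1 z + pd 2 (chr g k a b) (X z) * dX X i 2 z) * dX X j a z * V b z
      + chr g k a b (X z) * coord a (pd i (pd j X) z) * V b z + chr g k a b (X z) * dX X j a z * pd i (V b) z)"
    by (simp only: sum12 pc insert_iff simp_thms pd_dX[OF z])
  finally show ?thesis .
qed

lemma commutator:
  assumes z: "z \<in> \<Omega>" and k: "k \<in> {1,2}"
    and V1: "smooth_on \<Omega> (V 1)" and V2: "smooth_on \<Omega> (V 2)"
  shows "covd g X 1 (covd_field g X 2 V) z k - covd g X 2 (covd_field g X 1 V) z k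
    = (\<Sum>a\<in>{1,2}. \<Sum>b\<in>{1,2}. \<Sum>l\<in>{1,2}. dX X 1 a z * dX X 2 b z * V l z * Rtensor g k l a b (X z))"
proof -
  have kk: "k \<noteq> 3" using k by auto
  have sV: "pd 1 (pd 2 (V 1)) z = pd 2 (pd 1 (V 1)) z" "pd 1 (pd 2 (V 2)) z = pd 2 (pd 1 (V 2)) z"
    using schwarz_smooth[OF V1 \<Omega>_open z, of 1 2] schwarz_smooth[OF V2 \<Omega>_open z, of 1 2] by auto
  have sX: "pd 1 (pd 2 X) z = pd 2 (pd 1 X) z" by (rule schwarz_smooth_c[OF X_smooth \<Omega>_open z])
  have c12: "covd g X 1 (covd_field g X 2 V) z k = pd 1 (\<lambda>v. covd g X 2 V v k) z
      + (\<Sum>a\<in>{1,2}. \<Sum>b\<in>{1,2}. chr g k a b (X z) * dX X 1 a z * covd g X 2 V z b)"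
    using kk by (simp add: covd_def covd_field_def)
  have c21: "covd g X 2 (covd_field g X 1 V) z k = pd 2 (\<lambda>v. covd g X 1 V v k) z
      + (\<Sum>a\<in>{1,2}. \<Sum>b\<in>{1,2}. chr g k a b (X z) * dX X 2 a z * covd g X 1 V z b)"
    using kk by (simp add: covd_def covd_field_def)
  from k have "k = 1 \<or> k = 2" by auto
  then show ?thesis
    unfolding c12 c21 pd_covd[OF z k V1 V2]
    apply (elim disjE)
    apply (simp_all only: sum12 covd_1 covd_2 Rtensor_def sV sX)
    apply (simp_all add: algebra_simps)
    done
qed

lemma commutator_vertical:
  assumes z: "z \<in> \<Omega>" and V3: "smooth_on \<Omega> (V 3)"
  shows "covd g X 1 (covd_field g X 2 V) z 3 - covd g X 2 (covd_field g X 1 V) z 3 = 0"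
proof -
  have "pd 1 (pd 2 (V 3)) z = pd 2 (pd 1 (V 3)) z" using schwarz_smooth[OF V3 \<Omega>_open z] by simp
  then show ?thesis by (simp add: covd_def covd_field_def[abs_def])
qed

end

locale normal_surface = immersed_surface +
  assumes N_normal: "\<forall>z\<in>\<Omega>. \<forall>i\<in>{1,2}. gM g (X z) (NM z) (pd i X z) + \<nu> z * pd i h z = 0"
    and N_unit: "\<forall>z\<in>\<Omega>. gM g (X z) (NM z) (NM z) + \<nu> z * \<nu> z = 1"
begin

text \<open>N is orthonormal to the tangent frame; differentiating gives the Weingarten relations
  <nabla_i N, psi_j> = - II_ij and <nabla_i N, N> = 0.\<close>

lemma normal_orth:
  assumes z: "z \<in> \<Omega>" and j: "j \<in> {1,2}"
  shows "gprod g (X z) (field_at (nfield NM \<nu>) z) (field_at (dpsi X h j) z) = 0"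
proof -
  have "gM g (X z) (NM z) (pd j X z) + \<nu> z * pd j h z = 0" using N_normal z j by blast
  then show ?thesis by (simp add: gM_def gprod_def sum12 field_at_simps dpsi_simps nfield_simps dX_pd[OF z])
qed

lemma normal_unit: "z \<in> \<Omega> \<Longrightarrow> gprod g (X z) (field_at (nfield NM \<nu>) z) (field_at (nfield NM \<nu>) z) = 1"
  using N_unit by (simp add: gM_def gprod_def sum12 field_at_simps nfield_simps)

lemma dnormal_tangent:
  assumes z: "z \<in> \<Omega>" and j: "j \<in> {1,2}"
  shows "gprod g (X z) (covd g X i (nfield NM \<nu>) z) (field_at (dpsi X h j) z) = - IIfund g X h NM \<nu> z i j"
proof -
  have "pd i (\<lambda>v. gprod g (X v) (field_at (nfield NM \<nu>) v) (field_at (dpsi X h j) v)) z = pd i (\<lambda>v. 0::real) z"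
    by (rule pd_local[OF \<Omega>_open z]) (rule normal_orth[OF _ j], assumption)
  then have "gprod g (X z) (covd g X i (nfield NM \<nu>) z) (field_at (dpsi X h j) z)
     + gprod g (X z) (field_at (nfield NM \<nu>) z) (covd g X i (dpsi X h j) z) = 0"
    using gprod_product_rule[OF z nfield_diff[OF z] dpsi_diff[OF z]] by (simp add: pd_const)
  moreover have "gprod g (X z) (field_at (nfield NM \<nu>) z) (covd g X i (dpsi X h j) z) = IIfund g X h NM \<nu> z i j"
    using II_gprod[OF z] gprod_sym[OF Xz[OF z]] by (simp add: field_at_covd_field)
  ultimately show ?thesis by simp
qed

lemma dnormal_normal:
  assumes z: "z \<in> \<Omega>"
  shows "gprod g (X z) (covd g X i (nfield NM \<nu>) z) (field_at (nfield NM \<nu>) z) = 0"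
proof -
  have "pd i (\<lambda>v. gprod g (X v) (field_at (nfield NM \<nu>) v) (field_at (nfield NM \<nu>) v)) z = pd i (\<lambda>v. 1::real) z"
    by (rule pd_local[OF \<Omega>_open z]) (rule normal_unit, assumption)
  then have "gprod g (X z) (covd g X i (nfield NM \<nu>) z) (field_at (nfield NM \<nu>) z)
     + gprod g (X z) (field_at (nfield NM \<nu>) z) (covd g X i (nfield NM \<nu>) z) = 0"
    using gprod_product_rule[OF z nfield_diff[OF z] nfield_diff[OF z]] by (simp add: pd_const)
  then show ?thesis using gprod_sym[OF Xz[OF z]] by simp
qed

lemma dI_covd:
  assumes z: "z \<in> \<Omega>"
  shows "pd k (\<lambda>v. Ifund g X h v i j) z = gprod g (X z) (covd g X k (dpsi X h i) z) (field_at (dpsi X h j) z)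
      + gprod g (X z) (field_at (dpsi X h i) z) (covd g X k (dpsi X h j) z)"
proof -
  have "pd k (\<lambda>v. Ifund g X h v i j) z = pd k (\<lambda>v. gprod g (X v) (field_at (dpsi X h i) v) (field_at (dpsi X h j) v)) z"
    by (rule pd_local[OF \<Omega>_open z]) (simp add: I_gprod)
  then show ?thesis using gprod_product_rule[OF z dpsi_diff[OF z] dpsi_diff[OF z]] by simp
qed

end

lemma split_quadratic:
  fixes a b c d K1 K2 h1 h2 :: real
  shows "(c*K1*h1 - b*(K1*h2 + K2*h1) + a*K2*h2)/d = K1*((c*h1 - b*h2)/d) + K2*((a*h2 - b*h1)/d)"
  by (cases "d = 0") (simp_all add: field_simps)

lemma inverse_2x2:
  fixes a b c p q :: real
  assumes "a*c - b*b \<noteq> 0"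
  shows "a*((c*p - b*q)/(a*c - b*b)) + b*((a*q - b*p)/(a*c - b*b)) = p"
    "b*((c*p - b*q)/(a*c - b*b)) + c*((a*q - b*p)/(a*c - b*b)) = q"
proof -
  have "a*((c*p - b*q)/(a*c - b*b)) + b*((a*q - b*p)/(a*c - b*b)) = (a*(c*p - b*q) + b*(a*q - b*p))/(a*c - b*b)"
    by (simp add: add_divide_distrib)
  also have "a*(c*p - b*q) + b*(a*q - b*p) = p * (a*c - b*b)" by (simp add: algebra_simps)
  finally show "a*((c*p - b*q)/(a*c - b*b)) + b*((a*q - b*p)/(a*c - b*b)) = p" using assms by simp
  have "b*((c*p - b*q)/(a*c - b*b)) + c*((a*q - b*p)/(a*c - b*b)) = (b*(c*p - b*q) + c*(a*q - b*p))/(a*c - b*b)"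
    by (simp add: add_divide_distrib)
  also have "b*(c*p - b*q) + c*(a*q - b*p) = q * (a*c - b*b)" by (simp add: algebra_simps)
  finally show "b*((c*p - b*q)/(a*c - b*b)) + c*((a*q - b*p)/(a*c - b*b)) = q" using assms by simp
qed

lemma gauss_derivative_scaled:
  fixes d lam K L Y :: real
  assumes "lam \<noteq> 0" "lam * lam = K * d" "2 * lam * L = K * Y"
  shows "2 * d * L = lam * Y"
proof -
  have "lam * (2 * d * L) = d * (2 * lam * L)" by (simp add: algebra_simps)
  also have "\<dots> = (lam * lam) * Y" using assms(2,3) by (simp add: algebra_simps)
  finally show ?thesis using assms(1) by (simp add: algebra_simps)
qed

text \<open>The linear algebra solving the Codazzi system for the combinations
  a1 - c1 + 2 b2 and a2 - c2 - 2 b1 (derivatives of I = [[a,b],[b,c]]).\<close>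

lemma codazzi_algebra:
  fixes a b c d a1 a2 b1 b2 c1 c2 lam L1 L2 K ka nu h1 h2 :: real
  assumes dd: "d = a*c - b*b" "d \<noteq> 0" and lk: "lam \<noteq> 0" "K \<noteq> 0" "lam * lam = K * d"
    and KD1: "2*lam*L1 = K*(a1*c + a*c1 - 2*b*b1)" and KD2: "2*lam*L2 = K*(a2*c + a*c2 - 2*b*b2)"
    and C1: "L2 + lam*(a*(b1 - a2/2) - b*(a1/2))/d - lam*(c*(a2/2) - b*(c1/2))/d = ka*nu*(h1*b - h2*a)"
    and C2: "- L1 + lam*(a*(c1/2) - b*(a2/2))/d - lam*(c*(b2 - c1/2) - b*(c2/2))/d = ka*nu*(h1*c - h2*b)"
  shows "a1 - c1 + 2*b2 = -2*ka*nu*lam*h1/K" "a2 - c2 - 2*b1 = 2*ka*nu*lam*h2/K"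
proof -
  define mu where "mu = ka * nu * lam / K"
  define p where "p = a1 - c1 + 2*b2 + 2*mu*h1"
  define q where "q = a2 - c2 - 2*b1 - 2*mu*h2"
  have dmu: "2 * d * (ka * nu) = lam * (2 * mu)" using lk by (simp add: mu_def field_simps)
  have dL1: "2*d*L1 = lam*(a1*c + a*c1 - 2*b*b1)" by (rule gauss_derivative_scaled[OF lk(1,3) KD1])
  have dL2: "2*d*L2 = lam*(a2*c + a*c2 - 2*b*b2)" by (rule gauss_derivative_scaled[OF lk(1,3) KD2])
  have "2*d*L2 + lam*(2*a*b1 - a*a2 - b*a1) - lam*(c*a2 - b*c1)
      = 2*d*(L2 + lam*(a*(b1 - a2/2) - b*(a1/2))/d - lam*(c*(a2/2) - b*(c1/2))/d)"
    using dd(2) by (simp add: field_simps)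
  also have "\<dots> = 2*d*(ka*nu)*(h1*b - h2*a)" unfolding C1 by simp
  finally have "lam * (a*q + b*p) = 0"
    unfolding dL2 dmu p_def q_def by (simp add: algebra_simps)
  then have e1: "a*q + b*p = 0" using lk(1) by simp
  have "- (2*d*L1) + lam*(a*c1 - b*a2) - lam*(2*c*b2 - c*c1 - b*c2)
      = 2*d*(- L1 + lam*(a*(c1/2) - b*(a2/2))/d - lam*(c*(b2 - c1/2) - b*(c2/2))/d)"
    using dd(2) by (simp add: field_simps)
  also have "\<dots> = 2*d*(ka*nu)*(h1*c - h2*b)" unfolding C2 by simp
  finally have "lam * (c*p + b*q) = 0"
    unfolding dL1 dmu p_def q_def by (simp add: algebra_simps)
  then have e2: "c*p + b*q = 0" using lk(1) by simp
  have "d * p = a*(c*p + b*q) - b*(a*q + b*p)" and "d * q = c*(a*q + b*p) - b*(c*p + b*q)"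
    by (simp_all add: dd(1) algebra_simps)
  then have "d * p = 0" "d * q = 0" unfolding e1 e2 by simp_all
  then have "p = 0" "q = 0" using dd(2) by simp_all
  then show "a1 - c1 + 2*b2 = -2*ka*nu*lam*h1/K" "a2 - c2 - 2*b1 = 2*ka*nu*lam*h2/K"
    unfolding p_def q_def mu_def by (simp_all add: field_simps)
qed

text \<open>The algebra behind Delta nu = -2 H nu.\<close>

lemma lap_nu_algebra:
  fixes a b c d a1 a2 b1 b2 c1 c2 lam L1 L2 K nu t11 t12 t21 t22 \<tau>1 \<tau>2 h11 h12 h21 h22 :: real
  assumes dd: "d = a*c - b*b" "d \<noteq> 0" and lk: "lam \<noteq> 0" "K \<noteq> 0" "lam * lam = K * d"
    and KD1: "2*lam*L1 = K*(a1*c + a*c1 - 2*b*b1)" and KD2: "2*lam*L2 = K*(a2*c + a*c2 - 2*b*b2)"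
    and T11: "a1*\<tau>1 + b1*\<tau>2 + a*t11 + b*t21 = h11"
    and T21: "b1*\<tau>1 + c1*\<tau>2 + b*t11 + c*t21 = h21"
    and T12: "a2*\<tau>1 + b2*\<tau>2 + a*t12 + b*t22 = h12"
    and T22: "b2*\<tau>1 + c2*\<tau>2 + b*t12 + c*t22 = h22"
    and H11: "h11 = (a1/2)*\<tau>1 + (b1 - a2/2)*\<tau>2 + lam*nu"
    and H12: "h12 = (a2/2)*\<tau>1 + (c1/2)*\<tau>2"
    and H21: "h21 = (a2/2)*\<tau>1 + (c1/2)*\<tau>2"
    and H22: "h22 = (b2 - c1/2)*\<tau>1 + (c2/2)*\<tau>2 + lam*nu"
  shows "(- (L1*\<tau>1 + lam*t11) - (L2*\<tau>2 + lam*t22)) / lam = - 2 * (lam*(a + c)/(2*d)) * nu"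
proof -
  have dL1: "2*d*L1 = lam*(a1*c + a*c1 - 2*b*b1)" by (rule gauss_derivative_scaled[OF lk(1,3) KD1])
  have dL2: "2*d*L2 = lam*(a2*c + a*c2 - 2*b*b2)" by (rule gauss_derivative_scaled[OF lk(1,3) KD2])
  have "d*t11 = c*(a*t11 + b*t21) - b*(b*t11 + c*t21)" by (simp add: dd(1) algebra_simps)
  also have "a*t11 + b*t21 = h11 - a1*\<tau>1 - b1*\<tau>2" using T11 by simp
  also have "b*t11 + c*t21 = h21 - b1*\<tau>1 - c1*\<tau>2" using T21 by simp
  finally have dt11: "d*t11 = c*(h11 - a1*\<tau>1 - b1*\<tau>2) - b*(h21 - b1*\<tau>1 - c1*\<tau>2)" .
  have "d*t22 = a*(b*t12 + c*t22) - b*(a*t12 + b*t22)" by (simp add: dd(1) algebra_simps)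
  also have "b*t12 + c*t22 = h22 - b2*\<tau>1 - c2*\<tau>2" using T22 by simp
  also have "a*t12 + b*t22 = h12 - a2*\<tau>1 - b2*\<tau>2" using T12 by simp
  finally have dt22: "d*t22 = a*(h22 - b2*\<tau>1 - c2*\<tau>2) - b*(h12 - a2*\<tau>1 - b2*\<tau>2)" .
  have main: "d*(- (L1*\<tau>1 + lam*t11) - (L2*\<tau>2 + lam*t22)) = - lam*lam*(a + c)*nu"
  proof -
    have "2*(d*(- (L1*\<tau>1 + lam*t11) - (L2*\<tau>2 + lam*t22)))
        = - (2*d*L1)*\<tau>1 - (2*d*L2)*\<tau>2 - 2*lam*(d*t11) - 2*lam*(d*t22)" by (simp add: algebra_simps)
    also have "\<dots> = 2*(- lam*lam*(a + c)*nu)"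
      unfolding dL1 dL2 dt11 dt22 H11 H12 H21 H22 by (simp add: algebra_simps)
    finally show ?thesis by simp
  qed
  then have "- (L1*\<tau>1 + lam*t11) - (L2*\<tau>2 + lam*t22) = - lam*lam*(a + c)*nu / d"
    using dd(2) by (simp add: field_simps)
  then show ?thesis using lk(1) dd(2) by (simp add: field_simps)
qed

lemma qf_1: "qf M 1 = M 1 1" by (simp add: qf_def sum12 coord_def)

lemma qf_i: "qf M \<i> = M 2 2" by (simp add: qf_def sum12 coord_def)

lemma qf_1i: "qf M (1 + \<i>) = M 1 1 + M 1 2 + M 2 1 + M 2 2" by (simp add: qf_def sum12 coord_def)

section \<open>Surfaces of constant extrinsic curvature in a conformal parameter for II\<close>

locale kconst_surface = normal_surface g U \<Omega> X h NM \<nu> for g U \<Omega> X h NM \<nu> +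
  fixes E :: "complex \<Rightarrow> complex" and F \<rho> :: "complex \<Rightarrow> real" and K :: real
  assumes II_posdef: "\<forall>z\<in>\<Omega>. \<forall>a. a \<noteq> 0 \<longrightarrow> qf (IIfund g X h NM \<nu> z) a > 0"
    and K_pos: "K > 0"
    and K_const: "\<forall>z\<in>\<Omega>. ext_curv (Ifund g X h z) (IIfund g X h NM \<nu> z) = K"
    and I_conf: "\<forall>z\<in>\<Omega>. \<forall>a. qf (Ifund g X h z) a = 2 * Re (E z * a\<^sup>2) + 2 * F z * (cmod a)\<^sup>2"
    and II_conf: "\<forall>z\<in>\<Omega>. \<forall>a. qf (IIfund g X h NM \<nu> z) a = 2 * \<rho> z * (cmod a)\<^sup>2"
begin

abbreviation I11 :: "complex \<Rightarrow> real" where "I11 v \<equiv> Ifund g X h v 1 1"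

abbreviation I12 :: "complex \<Rightarrow> real" where "I12 v \<equiv> Ifund g X h v 1 2"

abbreviation I22 :: "complex \<Rightarrow> real" where "I22 v \<equiv> Ifund g X h v 2 2"

abbreviation II11 :: "complex \<Rightarrow> real" where "II11 v \<equiv> IIfund g X h NM \<nu> v 1 1"

text \<open>II and I are symmetric (torsion freeness along X, symmetry of g).\<close>

lemma II_sym: "z \<in> \<Omega> \<Longrightarrow> IIfund g X h NM \<nu> z 1 2 = IIfund g X h NM \<nu> z 2 1"
  using II_gprod covd_dpsi_sym[of z 1 2] by (simp add: field_at_covd_field)

lemma I_sym: "z \<in> \<Omega> \<Longrightarrow> I12 z = Ifund g X h z 2 1"
  using I_gprod gprod_sym[OF Xz] by metis

lemma II_entries:
  assumes z: "z \<in> \<Omega>"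
  shows "II11 z = 2 * \<rho> z" "IIfund g X h NM \<nu> z 2 2 = 2 * \<rho> z"
    "IIfund g X h NM \<nu> z 1 2 = 0" "IIfund g X h NM \<nu> z 2 1 = 0"
proof -
  have c: "qf (IIfund g X h NM \<nu> z) a = 2 * \<rho> z * (cmod a)\<^sup>2" for a using II_conf z by blast
  show a: "II11 z = 2 * \<rho> z" using c[of 1] by (simp add: qf_1)
  show b: "IIfund g X h NM \<nu> z 2 2 = 2 * \<rho> z" using c[of \<i>] by (simp add: qf_i)
  have m: "cmod (1 + \<i>) ^ 2 = 2" by (simp add: cmod_def)
  have "IIfund g X h NM \<nu> z 1 2 + IIfund g X h NM \<nu> z 2 1 = 0"
    using c[of "1 + \<i>"] a b m by (simp add: qf_1i)
  then show "IIfund g X h NM \<nu> z 1 2 = 0" "IIfund g X h NM \<nu> z 2 1 = 0" using II_sym[OF z] by simp_all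
qed

lemma rho_pos: "z \<in> \<Omega> \<Longrightarrow> \<rho> z > 0"
proof -
  assume z: "z \<in> \<Omega>"
  have "qf (IIfund g X h NM \<nu> z) 1 > 0" using II_posdef z by simp
  then show ?thesis using II_entries(1)[OF z] by (simp add: qf_1)
qed

lemma E_entries:
  assumes z: "z \<in> \<Omega>"
  shows "E z = Complex ((I11 z - I22 z) / 4) (- I12 z / 2)"
proof -
  have c: "qf (Ifund g X h z) a = 2 * Re (E z * a\<^sup>2) + 2 * F z * (cmod a)\<^sup>2" for a using I_conf z by blast
  have a: "I11 z = 2 * Re (E z) + 2 * F z" using c[of 1] by (simp add: qf_1)
  have b: "I22 z = - 2 * Re (E z) + 2 * F z" using c[of \<i>] by (simp add: qf_i power2_eq_square)
  have m: "cmod (1 + \<i>) ^ 2 = 2" by (simp add: cmod_def)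
  have e: "Re (E z * (1 + \<i>)\<^sup>2) = - 2 * Im (E z)" by (simp add: power2_eq_square algebra_simps)
  have "I11 z + I12 z + Ifund g X h z 2 1 + I22 z = - 4 * Im (E z) + 4 * F z"
    using c[of "1 + \<i>"] m e by (simp add: qf_1i)
  then have "I12 z = - 2 * Im (E z)" using a b I_sym[OF z] by simp
  then show ?thesis using a b by (simp add: complex_eq_iff)
qed

lemma det_I:
  assumes z: "z \<in> \<Omega>"
  shows "I11 z * I22 z - I12 z * I12 z = (2 * \<rho> z) * (2 * \<rho> z) / K"
proof -
  have k: "det2 (IIfund g X h NM \<nu> z) / det2 (Ifund g X h z) = K" using K_const z by (simp add: ext_curv_def)
  have d2: "det2 (IIfund g X h NM \<nu> z) = (2 * \<rho> z) * (2 * \<rho> z)" using II_entries[OF z] by (simp add: det2_def)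
  have di: "det2 (Ifund g X h z) = I11 z * I22 z - I12 z * I12 z"
    using I_sym[OF z] by (simp add: det2_def)
  have "det2 (Ifund g X h z) \<noteq> 0" using k K_pos by auto
  then show ?thesis using k d2 di K_pos by (simp add: field_simps)
qed

lemma det_I_pos:
  assumes z: "z \<in> \<Omega>"
  shows "I11 z * I22 z - I12 z * I12 z > 0"
  using det_I[OF z] rho_pos[OF z] K_pos by simp

lemma gauss_eq_derivative:
  assumes z: "z \<in> \<Omega>"
  shows "2 * (2 * \<rho> z) * pd k II11 z = K * (pd k I11 z * I22 z + I11 z * pd k I22 z - 2 * I12 z * pd k I12 z)"
proof -
  have "pd k (\<lambda>v. II11 v * II11 v) z
      = pd k (\<lambda>v. K * (I11 v * I22 v - I12 v * I12 v)) z"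
  proof (rule pd_local[OF \<Omega>_open z])
    fix v assume v: "v \<in> \<Omega>"
    show "II11 v * II11 v
      = K * (I11 v * I22 v - I12 v * I12 v)"
      using det_I[OF v] II_entries(1)[OF v] K_pos by simp
  qed
  then show ?thesis
    using I_differentiable[OF z] II_differentiable[OF z] II_entries(1)[OF z]
    by (simp add: pd_mult pd_cmult pd_diff pd_const algebra_simps)
qed

lemma covd_dpsi_sym_12:
  assumes z: "z \<in> \<Omega>"
  shows "gprod g (X z) (covd g X 2 (dpsi X h 1) z) Y = gprod g (X z) (covd g X 1 (dpsi X h 2) z) Y"
  using covd_dpsi_sym[OF z, of 1 2] by simp

lemma dI_covd_sym:
  assumes z: "z \<in> \<Omega>"
  shows "pd k (\<lambda>v. Ifund g X h v i j) z = gprod g (X z) (covd g X k (dpsi X h i) z) (field_at (dpsi X h j) z)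
      + gprod g (X z) (covd g X k (dpsi X h j) z) (field_at (dpsi X h i) z)"
  using dI_covd[OF z] gprod_sym[OF Xz[OF z]] by metis

lemma koszul:
  assumes z: "z \<in> \<Omega>"
  defines "G \<equiv> gprod g (X z)" and "P \<equiv> \<lambda>j. field_at (dpsi X h j) z"
  shows "G (covd g X 1 (dpsi X h 1) z) (P 1) = pd 1 I11 z / 2"
    "G (covd g X 1 (dpsi X h 1) z) (P 2) = pd 1 I12 z - pd 2 I11 z / 2"
    "G (covd g X 1 (dpsi X h 2) z) (P 1) = pd 2 I11 z / 2"
    "G (covd g X 1 (dpsi X h 2) z) (P 2) = pd 1 I22 z / 2"
    "G (covd g X 2 (dpsi X h 2) z) (P 1) = pd 2 I12 z - pd 1 I22 z / 2"
    "G (covd g X 2 (dpsi X h 2) z) (P 2) = pd 2 I22 z / 2"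
proof -
  note d = dI_covd_sym[OF z]
  note cs = covd_dpsi_sym_12[OF z]
  show "G (covd g X 1 (dpsi X h 1) z) (P 1) = pd 1 I11 z / 2"
    using d[of 1 1 1] unfolding G_def P_def by simp
  show "G (covd g X 1 (dpsi X h 1) z) (P 2) = pd 1 I12 z - pd 2 I11 z / 2"
    using d[of 1 1 2] d[of 2 1 1] cs unfolding G_def P_def by simp
  show "G (covd g X 1 (dpsi X h 2) z) (P 1) = pd 2 I11 z / 2"
    using d[of 2 1 1] cs unfolding G_def P_def by simp
  show "G (covd g X 1 (dpsi X h 2) z) (P 2) = pd 1 I22 z / 2"
    using d[of 1 2 2] unfolding G_def P_def by simp
  show "G (covd g X 2 (dpsi X h 2) z) (P 1) = pd 2 I12 z - pd 1 I22 z / 2"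
    using d[of 2 1 2] d[of 1 2 2] cs unfolding G_def P_def by simp
  show "G (covd g X 2 (dpsi X h 2) z) (P 2) = pd 2 I22 z / 2"
    using d[of 2 2 2] unfolding G_def P_def by simp
qed

lemma frame_expansion:
  assumes z: "z \<in> \<Omega>"
  shows "gprod g (X z) Y V = (I22 z * gprod g (X z) V (field_at (dpsi X h 1) z) * gprod g (X z) Y (field_at (dpsi X h 1) z)
       - I12 z * (gprod g (X z) V (field_at (dpsi X h 1) z) * gprod g (X z) Y (field_at (dpsi X h 2) z)
             + gprod g (X z) V (field_at (dpsi X h 2) z) * gprod g (X z) Y (field_at (dpsi X h 1) z))
       + I11 z * gprod g (X z) V (field_at (dpsi X h 2) z) * gprod g (X z) Y (field_at (dpsi X h 2) z))
       / (I11 z * I22 z - I12 z * I12 z)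
       + gprod g (X z) V (field_at (nfield NM \<nu>) z) * gprod g (X z) Y (field_at (nfield NM \<nu>) z)"
proof -
  have nz: "gprod g (X z) (field_at (dpsi X h 1) z) (field_at (dpsi X h 1) z) * gprod g (X z) (field_at (dpsi X h 2) z) (field_at (dpsi X h 2) z)
      - gprod g (X z) (field_at (dpsi X h 1) z) (field_at (dpsi X h 2) z) * gprod g (X z) (field_at (dpsi X h 1) z) (field_at (dpsi X h 2) z) \<noteq> 0"
    using det_I_pos[OF z] I_gprod[OF z] by (metis less_irrefl)
  show ?thesis
    using frame_expansion_general[OF Xz[OF z] normal_orth[OF z, of 1] normal_orth[OF z, of 2] normal_unit[OF z] nz, of Y V] I_gprod[OF z] by simp
qed

definition vertical :: "nat \<Rightarrow> real" where "vertical = (\<lambda>k. if k = 3 then 1 else 0)"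

lemma gprod_vertical: "gprod g w vertical Y = Y 3"
  by (simp add: gprod_expand vertical_def)

text \<open>tau1, tau2 are the coordinates of the tangential part of d/dt in the frame psi_x, psi_y,
  i.e. of the I-gradient of h: they solve I tau = dh.\<close>

definition tau1 :: "complex \<Rightarrow> real" where
  "tau1 v = (I22 v * pd 1 h v - I12 v * pd 2 h v) / (I11 v * I22 v - I12 v * I12 v)"

definition tau2 :: "complex \<Rightarrow> real" where
  "tau2 v = (I11 v * pd 2 h v - I12 v * pd 1 h v) / (I11 v * I22 v - I12 v * I12 v)"

lemma tau_eqs:
  assumes v: "v \<in> \<Omega>"
  shows "I11 v * tau1 v + I12 v * tau2 v = pd 1 h v"
    and "I12 v * tau1 v + I22 v * tau2 v = pd 2 h v"
  using inverse_2x2[of "I11 v" "I22 v" "I12 v"] det_I_pos[OF v]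
  unfolding tau1_def tau2_def by auto

lemma tau_diff:
  assumes z: "z \<in> \<Omega>"
  shows "tau1 differentiable (at z)" "tau2 differentiable (at z)"
  using I_differentiable[OF z] smooth_d1[OF h_smooth z] det_I_pos[OF z]
  unfolding tau1_def[abs_def] tau2_def[abs_def]
  by (auto intro!: differentiable_divide differentiable_diff differentiable_mult)

text \<open>Expanding d/dt in the frame: |grad h|^2 + nu^2 = 1.\<close>

lemma grad_h_unit:
  assumes z: "z \<in> \<Omega>"
  shows "pd 1 h z * tau1 z + pd 2 h z * tau2 z + \<nu> z * \<nu> z = 1"
proof -
  have "gprod g (X z) vertical vertical = 1" by (simp only: gprod_vertical) (simp add: vertical_def)
  then show ?thesis using frame_expansion[OF z, of vertical vertical] det_I_pos[OF z]
    by (simp add: gprod_vertical field_at_simps dpsi_simps nfield_simps tau1_def tau2_def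
        add_divide_distrib[symmetric] algebra_simps)
qed

lemma gauss_formula_h:
  assumes z: "z \<in> \<Omega>"
  shows "pd i (pd j h) z = gprod g (X z) (covd g X i (dpsi X h j) z) (field_at (dpsi X h 1) z) * tau1 z
       + gprod g (X z) (covd g X i (dpsi X h j) z) (field_at (dpsi X h 2) z) * tau2 z
       + IIfund g X h NM \<nu> z i j * \<nu> z"
proof -
  have "gprod g (X z) vertical (covd g X i (dpsi X h j) z) = pd i (pd j h) z"
    by (simp add: gprod_vertical covd_3 dpsi_def)
  then show ?thesis using frame_expansion[OF z, of vertical "covd g X i (dpsi X h j) z"] II_gprod[OF z]
    by (simp add: gprod_vertical field_at_simps dpsi_simps nfield_simps field_at_covd_field
        tau1_def tau2_def split_quadratic)
qed

text \<open>With the Koszul formula and II = 2 rho |dz|^2 the Hessian of h becomes explicit.\<close>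

lemma hessian_h:
  assumes z: "z \<in> \<Omega>"
  shows "pd 1 (pd 1 h) z = pd 1 I11 z / 2 * tau1 z + (pd 1 I12 z - pd 2 I11 z / 2) * tau2 z + 2 * \<rho> z * \<nu> z"
    and "pd 2 (pd 1 h) z = pd 2 I11 z / 2 * tau1 z + pd 1 I22 z / 2 * tau2 z"
    and "pd 1 (pd 2 h) z = pd 2 I11 z / 2 * tau1 z + pd 1 I22 z / 2 * tau2 z"
    and "pd 2 (pd 2 h) z = (pd 2 I12 z - pd 1 I22 z / 2) * tau1 z + pd 2 I22 z / 2 * tau2 z + 2 * \<rho> z * \<nu> z"
  unfolding gauss_formula_h[OF z] covd_dpsi_sym_12[OF z] koszul[OF z] II_entries[OF z] by simp_all

text \<open>Weingarten equation: the shape operator is 2 rho I^{-1}.  Stated for an arbitrary vector V.\<close>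

lemma weingarten:
  assumes z: "z \<in> \<Omega>"
  defines "d \<equiv> I11 z * I22 z - I12 z * I12 z" and "G \<equiv> gprod g (X z)"
    and "P \<equiv> \<lambda>j. field_at (dpsi X h j) z"
  shows "G (covd g X 1 (nfield NM \<nu>) z) V = - 2 * \<rho> z * (I22 z * G V (P 1) - I12 z * G V (P 2)) / d"
    and "G (covd g X 2 (nfield NM \<nu>) z) V = - 2 * \<rho> z * (I11 z * G V (P 2) - I12 z * G V (P 1)) / d"
  using frame_expansion[OF z, of "covd g X 1 (nfield NM \<nu>) z" V]
    frame_expansion[OF z, of "covd g X 2 (nfield NM \<nu>) z" V]
    dnormal_tangent[OF z, of 1] dnormal_tangent[OF z, of 2] dnormal_normal[OF z] II_entries[OF z]
  unfolding d_def G_def P_def by (simp_all add: field_simps)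

lemma weingarten_nu:
  assumes z: "z \<in> \<Omega>"
  shows "pd 1 \<nu> z = - (2 * \<rho> z) * tau1 z" and "pd 2 \<nu> z = - (2 * \<rho> z) * tau2 z"
proof -
  have dnu: "gprod g (X z) (covd g X i (nfield NM \<nu>) z) vertical = pd i \<nu> z" for i
    using gprod_sym[OF Xz[OF z]] by (simp add: gprod_vertical covd_3 nfield_def)
  have dh: "gprod g (X z) vertical (field_at (dpsi X h j) z) = pd j h z" for j
    by (simp add: gprod_vertical field_at_simps dpsi_simps)
  show "pd 1 \<nu> z = - (2 * \<rho> z) * tau1 z" "pd 2 \<nu> z = - (2 * \<rho> z) * tau2 z"
    using weingarten(1)[OF z, of vertical] weingarten(2)[OF z, of vertical]
    unfolding dnu dh by (simp_all add: tau1_def tau2_def)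
qed

lemma hessian_nu:
  assumes z: "z \<in> \<Omega>"
  shows "pd 1 (pd 1 \<nu>) z = - (pd 1 II11 z * tau1 z + 2 * \<rho> z * pd 1 tau1 z)"
    and "pd 2 (pd 2 \<nu>) z = - (pd 2 II11 z * tau2 z + 2 * \<rho> z * pd 2 tau2 z)"
proof -
  have prod: "pd k (\<lambda>v. - II11 v * tau v) z = - (pd k II11 z * tau z + 2 * \<rho> z * pd k tau z)"
    if "tau differentiable (at z)" for k tau
  proof -
    have "(\<lambda>v. - II11 v) differentiable (at z)" using II_differentiable[OF z] by simp
    then show ?thesis
      using pd_mult[OF _ that, of "\<lambda>v. - II11 v" k] pd_minus[OF II_differentiable[OF z], of k]
        II_entries(1)[OF z] by (simp add: algebra_simps)
  qed
  have "pd 1 (pd 1 \<nu>) z = pd 1 (\<lambda>v. - II11 v * tau1 v) z"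
    by (rule pd_local[OF \<Omega>_open z]) (simp add: weingarten_nu II_entries)
  then show "pd 1 (pd 1 \<nu>) z = - (pd 1 II11 z * tau1 z + 2 * \<rho> z * pd 1 tau1 z)"
    using prod tau_diff[OF z] by simp
  have "pd 2 (pd 2 \<nu>) z = pd 2 (\<lambda>v. - II11 v * tau2 v) z"
    by (rule pd_local[OF \<Omega>_open z]) (simp add: weingarten_nu II_entries)
  then show "pd 2 (pd 2 \<nu>) z = - (pd 2 II11 z * tau2 z + 2 * \<rho> z * pd 2 tau2 z)"
    using prod tau_diff[OF z] by simp
qed

lemma dtau_eqs:
  assumes z: "z \<in> \<Omega>"
  shows "pd k I11 z * tau1 z + pd k I12 z * tau2 z + I11 z * pd k tau1 z + I12 z * pd k tau2 z = pd k (pd 1 h) z"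
    and "pd k I12 z * tau1 z + pd k I22 z * tau2 z + I12 z * pd k tau1 z + I22 z * pd k tau2 z = pd k (pd 2 h) z"
proof -
  note d = I_differentiable[OF z] tau_diff[OF z]
  have "pd k (pd 1 h) z = pd k (\<lambda>v. I11 v * tau1 v + I12 v * tau2 v) z"
    by (rule pd_local[OF \<Omega>_open z]) (simp add: tau_eqs(1))
  then show "pd k I11 z * tau1 z + pd k I12 z * tau2 z + I11 z * pd k tau1 z + I12 z * pd k tau2 z = pd k (pd 1 h) z"
    using d by (simp add: pd_add pd_mult algebra_simps)
  have "pd k (pd 2 h) z = pd k (\<lambda>v. I12 v * tau1 v + I22 v * tau2 v) z"
    by (rule pd_local[OF \<Omega>_open z]) (simp add: tau_eqs(2))
  then show "pd k I12 z * tau1 z + pd k I22 z * tau2 z + I12 z * pd k tau1 z + I22 z * pd k tau2 z = pd k (pd 2 h) z"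
    using d by (simp add: pd_add pd_mult algebra_simps)
qed

lemma lap_nu:
  assumes z: "z \<in> \<Omega>"
  shows "lapII \<rho> (\<lambda>w. complex_of_real (\<nu> w)) z
     = complex_of_real (- 2 * mean_curv (Ifund g X h z) (IIfund g X h NM \<nu> z) * \<nu> z)"
proof -
  have lam: "2 * \<rho> z \<noteq> 0" using rho_pos[OF z] by simp
  have d: "I11 z * I22 z - I12 z * I12 z \<noteq> 0" using det_I_pos[OF z] by simp
  have ll: "(2 * \<rho> z) * (2 * \<rho> z) = K * (I11 z * I22 z - I12 z * I12 z)"
    using det_I[OF z] K_pos by (simp add: field_simps)
  have "(- (pd 1 II11 z * tau1 z + 2 * \<rho> z * pd 1 tau1 z) - (pd 2 II11 z * tau2 z + 2 * \<rho> z * pd 2 tau2 z))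
        / (2 * \<rho> z)
      = - 2 * (2 * \<rho> z * (I11 z + I22 z) / (2 * (I11 z * I22 z - I12 z * I12 z))) * \<nu> z"
    by (rule lap_nu_algebra[OF refl d lam _ ll gauss_eq_derivative[OF z] gauss_eq_derivative[OF z]
          dtau_eqs(1)[OF z] dtau_eqs(2)[OF z] dtau_eqs(1)[OF z] dtau_eqs(2)[OF z] hessian_h[OF z]])
       (use K_pos in simp)
  moreover have "mean_curv (Ifund g X h z) (IIfund g X h NM \<nu> z)
      = 2 * \<rho> z * (I11 z + I22 z) / (2 * (I11 z * I22 z - I12 z * I12 z))"
    using II_entries[OF z] I_sym[OF z] unfolding mean_curv_def det2_def by (simp add: algebra_simps)
  ultimately show ?thesis
    using lap_real[OF \<Omega>_open z \<nu>_smooth, of \<rho>] hessian_nu[OF z] by (simp add: algebra_simps)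
qed

lemma covd_covd_normal:
  assumes z: "z \<in> \<Omega>" and j: "j \<in> {1,2}"
  shows "gprod g (X z) (covd g X k (covd_field g X i (nfield NM \<nu>)) z) (field_at (dpsi X h j) z)
     = - pd k (\<lambda>v. IIfund g X h NM \<nu> v i j) z - gprod g (X z) (covd g X i (nfield NM \<nu>) z) (covd g X k (dpsi X h j) z)"
proof -
  have "pd k (\<lambda>v. gprod g (X v) (field_at (covd_field g X i (nfield NM \<nu>)) v) (field_at (dpsi X h j) v)) z
      = pd k (\<lambda>v. - IIfund g X h NM \<nu> v i j) z"
    by (rule pd_local[OF \<Omega>_open z]) (simp add: field_at_covd_field dnormal_tangent[OF _ j])
  moreover have "pd k (\<lambda>v. gprod g (X v) (field_at (covd_field g X i (nfield NM \<nu>)) v) (field_at (dpsi X h j) v)) z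
      = gprod g (X z) (covd g X k (covd_field g X i (nfield NM \<nu>)) z) (field_at (dpsi X h j) z)
        + gprod g (X z) (covd g X i (nfield NM \<nu>) z) (covd g X k (dpsi X h j) z)"
    using gprod_product_rule[OF z covd_field_diff[OF z nfield_smooth] dpsi_diff[OF z]] by (simp add: field_at_covd_field)
  moreover have "pd k (\<lambda>v. - IIfund g X h NM \<nu> v i j) z = - pd k (\<lambda>v. IIfund g X h NM \<nu> v i j) z"
    by (rule pd_minus[OF II_differentiable[OF z]])
  ultimately show ?thesis by simp
qed

text \<open>Ricci identity for N: the commutator of covariant derivatives of N is the curvature of
  M^2 applied to the horizontal part of N; paired with psi_j it gives kappa nu (dh x I).\<close>

lemma ricci_identity_normal:
  assumes z: "z \<in> \<Omega>" and j: "j \<in> {1,2}"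
  shows "gprod g (X z) (covd g X 1 (covd_field g X 2 (nfield NM \<nu>)) z) (field_at (dpsi X h j) z)
       - gprod g (X z) (covd g X 2 (covd_field g X 1 (nfield NM \<nu>)) z) (field_at (dpsi X h j) z)
     = gauss_curv g (X z) * \<nu> z * (pd 1 h z * Ifund g X h z 2 j - pd 2 h z * Ifund g X h z 1 j)"
proof -
  define \<Delta> where "\<Delta> = (\<lambda>k. covd g X 1 (covd_field g X 2 (nfield NM \<nu>)) z k - covd g X 2 (covd_field g X 1 (nfield NM \<nu>)) z k)"
  have d3: "\<Delta> 3 = 0" unfolding \<Delta>_def by (rule commutator_vertical[where V="nfield NM \<nu>", OF z nfield_smooth(3)])
  have dk: "\<Delta> k = (\<Sum>a\<in>{1,2}. \<Sum>b\<in>{1,2}. \<Sum>l\<in>{1,2}. coord a (pd 1 X z) * coord b (pd 2 X z) * coord l (NM z) * Rtensor g k l a b (X z))"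
    if k: "k \<in> {1,2}" for k
  proof -
    have "\<Delta> k = (\<Sum>a\<in>{1,2}. \<Sum>b\<in>{1,2}. \<Sum>l\<in>{1,2}. dX X 1 a z * dX X 2 b z * nfield NM \<nu> l z * Rtensor g k l a b (X z))"
      unfolding \<Delta>_def by (rule commutator[where V="nfield NM \<nu>", OF z k nfield_smooth(1) nfield_smooth(2)])
    then show ?thesis by (simp add: dX_pd[OF z] sum12 nfield_simps)
  qed
  have "gprod g (X z) \<Delta> (field_at (dpsi X h j) z)
      = (\<Sum>k\<in>{1,2}. \<Sum>m\<in>{1,2}. g k m (X z) *
           (\<Sum>a\<in>{1,2}. \<Sum>b\<in>{1,2}. \<Sum>l\<in>{1,2}. coord a (pd 1 X z) * coord b (pd 2 X z) * coord l (NM z) * Rtensor g k l a b (X z))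
           * coord m (pd j X z))"
    unfolding gprod_def using dk[of 1] dk[of 2] d3 j by (simp add: field_at_simps dpsi_def dX_pd[OF z] sum12)
  also have "\<dots> = gauss_curv g (X z) * (gM g (X z) (pd 2 X z) (NM z) * gM g (X z) (pd 1 X z) (pd j X z)
        - gM g (X z) (pd 1 X z) (NM z) * gM g (X z) (pd 2 X z) (pd j X z))"
    by (rule gauss_curv_tensor[OF Xz[OF z]])
  also have "\<dots> = gauss_curv g (X z) * \<nu> z * (pd 1 h z * Ifund g X h z 2 j - pd 2 h z * Ifund g X h z 1 j)"
  proof -
    have n: "gM g (X z) (pd i X z) (NM z) = - \<nu> z * pd i h z" if "i \<in> {1,2}" for i
      using N_normal z that gM_sym[OF Xz[OF z]] by (metis add.commute add_eq_0_iff minus_mult_left)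
    have I: "gM g (X z) (pd i X z) (pd j X z) = Ifund g X h z i j - pd i h z * pd j h z" for i
      by (simp add: Ifund_def)
    have n1: "gM g (X z) (pd 1 X z) (NM z) = - \<nu> z * pd 1 h z" using n by simp
    have n2: "gM g (X z) (pd 2 X z) (NM z) = - \<nu> z * pd 2 h z" using n by simp
    show ?thesis unfolding n1 n2 I[of 1] I[of 2] by (simp add: algebra_simps)
  qed
  finally show ?thesis unfolding \<Delta>_def gprod_diff_left .
qed

lemma dII_conformal:
  assumes z: "z \<in> \<Omega>"
  shows "pd k (\<lambda>v. IIfund g X h NM \<nu> v 1 2) z = 0" "pd k (\<lambda>v. IIfund g X h NM \<nu> v 2 1) z = 0"
    "pd k (\<lambda>v. IIfund g X h NM \<nu> v 2 2) z = pd k II11 z"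
proof -
  have "pd k (\<lambda>v. IIfund g X h NM \<nu> v 1 2) z = pd k (\<lambda>v. 0::real) z"
    "pd k (\<lambda>v. IIfund g X h NM \<nu> v 2 1) z = pd k (\<lambda>v. 0::real) z"
    "pd k (\<lambda>v. IIfund g X h NM \<nu> v 2 2) z = pd k II11 z"
    by (rule pd_local[OF \<Omega>_open z]; simp add: II_entries)+
  then show "pd k (\<lambda>v. IIfund g X h NM \<nu> v 1 2) z = 0" "pd k (\<lambda>v. IIfund g X h NM \<nu> v 2 1) z = 0"
    "pd k (\<lambda>v. IIfund g X h NM \<nu> v 2 2) z = pd k II11 z"
    by (simp_all add: pd_const)
qed

lemma codazzi_equations:
  assumes z: "z \<in> \<Omega>"
  defines "a \<equiv> I11 z" and "b \<equiv> I12 z" and "c \<equiv> I22 z" and "d \<equiv> I11 z * I22 z - I12 z * I12 z"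
    and "lam \<equiv> 2 * \<rho> z" and "ka \<equiv> gauss_curv g (X z)"
  shows "pd 2 II11 z + lam * (a * (pd 1 I12 z - pd 2 I11 z / 2) - b * (pd 1 I11 z / 2)) / d
           - lam * (c * (pd 2 I11 z / 2) - b * (pd 1 I22 z / 2)) / d = ka * \<nu> z * (pd 1 h z * b - pd 2 h z * a)"
    and "- pd 1 II11 z + lam * (a * (pd 1 I22 z / 2) - b * (pd 2 I11 z / 2)) / d
           - lam * (c * (pd 2 I12 z - pd 1 I22 z / 2) - b * (pd 2 I22 z / 2)) / d = ka * \<nu> z * (pd 1 h z * c - pd 2 h z * b)"
proof -
  have dpos: "d > 0" using det_I_pos[OF z] by (simp add: d_def)
  note W = weingarten[OF z] and ko = koszul[OF z] and sym = covd_dpsi_sym_12[OF z]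
  note dII = dII_conformal[OF z]
  have "gprod g (X z) (covd g X 1 (covd_field g X 2 (nfield NM \<nu>)) z) (field_at (dpsi X h 1) z)
      = - lam * (b * (pd 1 I11 z / 2) - a * (pd 1 I12 z - pd 2 I11 z / 2)) / d"
    using covd_covd_normal[OF z, of 1 1 2] dII W(2) ko dpos
    unfolding a_def b_def d_def lam_def by (simp add: field_simps)
  moreover have "gprod g (X z) (covd g X 2 (covd_field g X 1 (nfield NM \<nu>)) z) (field_at (dpsi X h 1) z)
      = - pd 2 II11 z + lam * (c * (pd 2 I11 z / 2) - b * (pd 1 I22 z / 2)) / d"
    using covd_covd_normal[OF z, of 1 2 1] W(1) ko sym dpos
    unfolding b_def c_def d_def lam_def by (simp add: field_simps)
  ultimately show "pd 2 II11 z + lam * (a * (pd 1 I12 z - pd 2 I11 z / 2) - b * (pd 1 I11 z / 2)) / d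
           - lam * (c * (pd 2 I11 z / 2) - b * (pd 1 I22 z / 2)) / d = ka * \<nu> z * (pd 1 h z * b - pd 2 h z * a)"
    using ricci_identity_normal[OF z, of 1] I_sym[OF z] unfolding a_def b_def ka_def
    by (simp add: algebra_simps diff_divide_distrib add_divide_distrib)
  have "gprod g (X z) (covd g X 1 (covd_field g X 2 (nfield NM \<nu>)) z) (field_at (dpsi X h 2) z)
      = - pd 1 II11 z - lam * (b * (pd 2 I11 z / 2) - a * (pd 1 I22 z / 2)) / d"
    using covd_covd_normal[OF z, of 2 1 2] dII W(2) ko dpos
    unfolding a_def b_def d_def lam_def by (simp add: field_simps)
  moreover have "gprod g (X z) (covd g X 2 (covd_field g X 1 (nfield NM \<nu>)) z) (field_at (dpsi X h 2) z)
      = lam * (c * (pd 2 I12 z - pd 1 I22 z / 2) - b * (pd 2 I22 z / 2)) / d"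
    using covd_covd_normal[OF z, of 2 2 1] dII W(1) ko dpos
    unfolding b_def c_def d_def lam_def by (simp add: field_simps)
  ultimately show "- pd 1 II11 z + lam * (a * (pd 1 I22 z / 2) - b * (pd 2 I11 z / 2)) / d
           - lam * (c * (pd 2 I12 z - pd 1 I22 z / 2) - b * (pd 2 I22 z / 2)) / d = ka * \<nu> z * (pd 1 h z * c - pd 2 h z * b)"
    using ricci_identity_normal[OF z, of 2] unfolding b_def c_def ka_def
    by (simp add: algebra_simps diff_divide_distrib add_divide_distrib)
qed

text \<open>Combining Codazzi with the derivative of the Gauss equation (K constant):
  the derivatives of I satisfy two linear relations in terms of kappa nu dh.\<close>

lemma codazzi_conformal:
  assumes z: "z \<in> \<Omega>"
  shows "pd 1 I11 z - pd 1 I22 z + 2 * pd 2 I12 z = - 2 * gauss_curv g (X z) * \<nu> z * (2 * \<rho> z) * pd 1 h z / K"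
    and "pd 2 I11 z - pd 2 I22 z - 2 * pd 1 I12 z = 2 * gauss_curv g (X z) * \<nu> z * (2 * \<rho> z) * pd 2 h z / K"
proof -
  have ll: "(2 * \<rho> z) * (2 * \<rho> z) = K * (I11 z * I22 z - I12 z * I12 z)"
    using det_I[OF z] K_pos by (simp add: field_simps)
  show "pd 1 I11 z - pd 1 I22 z + 2 * pd 2 I12 z = - 2 * gauss_curv g (X z) * \<nu> z * (2 * \<rho> z) * pd 1 h z / K"
    and "pd 2 I11 z - pd 2 I22 z - 2 * pd 1 I12 z = 2 * gauss_curv g (X z) * \<nu> z * (2 * \<rho> z) * pd 2 h z / K"
    using codazzi_algebra[OF refl _ _ _ ll gauss_eq_derivative[OF z] gauss_eq_derivative[OF z]
        codazzi_equations[OF z]] det_I_pos[OF z] rho_pos[OF z] K_pos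
    by auto
qed

lemma lap_h:
  assumes z: "z \<in> \<Omega>"
  shows "lapII \<rho> (\<lambda>w. complex_of_real (h w)) z
       = complex_of_real ((2 * K - gauss_curv g (X z) * (1 - (\<nu> z)\<^sup>2)) * \<nu> z / K)"
proof -
  define ka where "ka = gauss_curv g (X z)"
  have "pd 1 (pd 1 h) z + pd 2 (pd 2 h) z
      = (pd 1 I11 z - pd 1 I22 z + 2 * pd 2 I12 z) / 2 * tau1 z
        - (pd 2 I11 z - pd 2 I22 z - 2 * pd 1 I12 z) / 2 * tau2 z + 4 * \<rho> z * \<nu> z"
    unfolding hessian_h(1,4)[OF z] by (simp add: field_simps)
  also have "\<dots> = - ka * \<nu> z * (2 * \<rho> z) / K * (pd 1 h z * tau1 z + pd 2 h z * tau2 z) + 4 * \<rho> z * \<nu> z"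
    unfolding codazzi_conformal[OF z] ka_def by (simp add: algebra_simps)
  also have "\<dots> = (2 * \<rho> z) * ((2 * K - ka * (1 - \<nu> z * \<nu> z)) * \<nu> z / K)"
  proof -
    have grad: "pd 1 h z * tau1 z + pd 2 h z * tau2 z = 1 - \<nu> z * \<nu> z" using grad_h_unit[OF z] by simp
    show ?thesis unfolding grad using K_pos by (simp add: field_simps)
  qed
  finally show ?thesis
    using lap_real[OF \<Omega>_open z h_smooth, of \<rho>] rho_pos[OF z] unfolding ka_def
    by (simp add: power2_eq_square)
qed

lemma dzb_E:
  assumes z: "z \<in> \<Omega>"
  shows "dzb E z = Complex ((pd 1 I11 z - pd 1 I22 z + 2 * pd 2 I12 z) / 8)
                           ((pd 2 I11 z - pd 2 I22 z - 2 * pd 1 I12 z) / 8)"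
proof -
  define f1 where "f1 = (\<lambda>v. (1/4) * (I11 v - I22 v))"
  define f2 where "f2 = (\<lambda>v. (-1/2) * I12 v)"
  note dI = I_differentiable[OF z]
  have df: "f1 differentiable (at z)" "f2 differentiable (at z)" unfolding f1_def f2_def using dI by auto
  have pf1: "pd k f1 z = (1/4) * (pd k I11 z - pd k I22 z)" for k
    unfolding f1_def by (simp only: pd_cmult[OF differentiable_diff[OF dI dI]] pd_diff[OF dI dI])
  have pf2: "pd k f2 z = (-1/2) * pd k I12 z" for k
    unfolding f2_def by (simp only: pd_cmult[OF dI])
  have pE: "pd k E z = complex_of_real (pd k f1 z) + \<i> * complex_of_real (pd k f2 z)" for k
  proof -
    have "pd k E z = pd k (\<lambda>v. complex_of_real (f1 v) + \<i> * complex_of_real (f2 v)) z"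
      by (rule pd_local[OF \<Omega>_open z]) (simp add: E_entries f1_def f2_def complex_eq_iff)
    also have "\<dots> = complex_of_real (pd k f1 z) + \<i> * complex_of_real (pd k f2 z)"
      using pd_add[OF ofreal_diff[OF df(1)] differentiable_mult[OF differentiable_const ofreal_diff[OF df(2)]]]
        pd_cmult[OF ofreal_diff[OF df(2)], of k \<i>] pd_ofreal[OF df(1)] pd_ofreal[OF df(2)] by simp
    finally show ?thesis .
  qed
  have "dzb E z = (pd 1 E z + \<i> * pd 2 E z) / 2" by (simp add: dzb_def pd_def)
  then show ?thesis unfolding pE pf1 pf2 by (simp add: complex_eq_iff field_simps)
qed

lemma dzb_E_eq:
  assumes z: "z \<in> \<Omega>"
  shows "dzb E z = complex_of_real (- gauss_curv g (X z) * \<nu> z * \<rho> z / K) * dz (\<lambda>w. complex_of_real (h w)) z"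
proof -
  have dzh: "dz (\<lambda>w. complex_of_real (h w)) z = Complex (pd 1 h z / 2) (- pd 2 h z / 2)"
    using pd_ofreal[OF smooth_d0[OF h_smooth z], of 1] pd_ofreal[OF smooth_d0[OF h_smooth z], of 2]
    by (simp add: dz_def pd_def complex_eq_iff)
  show ?thesis
    unfolding dzb_E[OF z] codazzi_conformal[OF z] dzh using K_pos by (simp add: complex_eq_iff field_simps)
qed

end

text \<open>The hypotheses of the theorem are exactly those of the locale kconst_surface.\<close>

theorem lemma6p2:
  fixes g :: metric and U \<Omega> :: "complex set"
    and X :: "complex \<Rightarrow> complex" and h :: "complex \<Rightarrow> real"
    and NM :: "complex \<Rightarrow> complex" and \<nu> :: "complex \<Rightarrow> real"
    and E :: "complex \<Rightarrow> complex" and F \<rho> :: "complex \<Rightarrow> real" and K :: real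
  assumes U_open: "open U"
    and g_smooth: "\<forall>i\<in>{1,2}. \<forall>j\<in>{1,2}. smooth_on U (g i j)"
    and g_sym: "\<forall>w\<in>U. g 1 2 w = g 2 1 w"
    and g_posdef: "\<forall>w\<in>U. g 1 1 w > 0 \<and> detg g w > 0"
    and \<Omega>_open: "open \<Omega>"
    and X_smooth: "smooth_on \<Omega> X" and h_smooth: "smooth_on \<Omega> h"
    and X_in: "X ` \<Omega> \<subseteq> U"
    and immersion: "\<forall>z\<in>\<Omega>. \<forall>a b::real.
        a *\<^sub>R pdx X z + b *\<^sub>R pdy X z = 0 \<and> a * pdx h z + b * pdy h z = 0 \<longrightarrow> a = 0 \<and> b = 0"
    and N_smooth: "smooth_on \<Omega> NM" "smooth_on \<Omega> \<nu>"
    and N_normal: "\<forall>z\<in>\<Omega>. \<forall>i\<in>{1,2}. gM g (X z) (NM z) (pd i X z) + \<nu> z * pd i h z = 0"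
    and N_unit: "\<forall>z\<in>\<Omega>. gM g (X z) (NM z) (NM z) + \<nu> z * \<nu> z = 1"
    and II_posdef: "\<forall>z\<in>\<Omega>. \<forall>a. a \<noteq> 0 \<longrightarrow> qf (IIfund g X h NM \<nu> z) a > 0"
    and K_pos: "K > 0"
    and K_const: "\<forall>z\<in>\<Omega>. ext_curv (Ifund g X h z) (IIfund g X h NM \<nu> z) = K"
    and I_conf: "\<forall>z\<in>\<Omega>. \<forall>a. qf (Ifund g X h z) a
                   = 2 * Re (E z * a\<^sup>2) + 2 * F z * (cmod a)\<^sup>2"
    and II_conf: "\<forall>z\<in>\<Omega>. \<forall>a. qf (IIfund g X h NM \<nu> z) a = 2 * \<rho> z * (cmod a)\<^sup>2"
  shows "\<forall>z\<in>\<Omega>.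
      lapII \<rho> (\<lambda>w. complex_of_real (h w)) z
        = complex_of_real ((2 * K - gauss_curv g (X z) * (1 - (\<nu> z)\<^sup>2)) * \<nu> z / K)
    \<and> lapII \<rho> (\<lambda>w. complex_of_real (\<nu> w)) z
        = complex_of_real (- 2 * mean_curv (Ifund g X h z) (IIfund g X h NM \<nu> z) * \<nu> z)
    \<and> dzb E z = complex_of_real (- gauss_curv g (X z) * \<nu> z * \<rho> z / K) * dz (\<lambda>w. complex_of_real (h w)) z"
proof -
  have surface: "kconst_surface g U \<Omega> X h NM \<nu> E F \<rho> K"
    unfolding kconst_surface_def kconst_surface_axioms_def normal_surface_def normal_surface_axioms_def
      immersed_surface_def immersed_surface_axioms_def chart_metric_def
    using assms by blast
  show ?thesis
    using kconst_surface.lap_h[OF surface] kconst_surface.lap_nu[OF surface]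
      kconst_surface.dzb_E_eq[OF surface] by blast
qed

end
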